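(* Let $B(z,\sigma)=\bar B(|z|,\cos\theta)$ be a collision kernel as in the context, with $b$ satisfying (H0) (i.e. $A_2<\infty$). Then: (I) For every $\varphi\in C^2(\mathbb R^N)$ the function $(v,v_* )\mapsto L_B[\Delta\varphi](v,v_* )$ is continuous on $\mathbb R^N\times\mathbb R^N$. (II) Let $B_n(z,\sigma)=\bar B_n(|z|,\cos\theta)$ where $\bar B_n\ge0$ are Borel, $r\mapsto\bar B_n(r,t)$ is continuous on $[0,\infty)$ for each $t\in(-1,1)$, and $\bar B_n(r,t)\nearrow\bar B(r,t)$ as $n\to\infty$ for all $(r,t)\in[0,\infty)\times(-1,1)$. Then for every $\varphi\in C^2(\mathbb R^N)$ and every $0<R<\infty$, $$\sup_{|v|+|v_*|\le R}\big|L_{B_n}[\Delta\varphi](v,v_* )-L_B[\Delta\varphi](v,v_* )\big|\to0\quad(n\to\infty).$$ Moreover, if $\varphi_n\in C^2(\mathbb R^N)$ satisfy $\varphi_n(v)\to\varphi(v)$ for all $v$ and $\sup_n\sup_{|v|\le R}\sum_{|\alpha|\le2}|\partial^\alpha\varphi_n(v)|<\infty$ for all $R<\infty$, then $L_{B_n}[\Delta\varphi_n](v,v_* )\to L_B[\Delta\varphi](v,v_* )$ for all $(v,v_* )\in\mathbb R^N\times\mathbb R^N$.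
   Context: Let $N\ge2$. For $v,v_*\in\mathbb R^N$, $\sigma\in\mathbb S^{N-1}$: $v'=\frac{v+v_*}{2}+\frac{|v-v_*|}{2}\sigma$, $v_*'=\frac{v+v_*}{2}-\frac{|v-v_*|}{2}\sigma$; $\mathbf n=(v-v_* )/|v-v_*|$ ($\mathbf n=\mathbf e_1$ if $v=v_*$), $\cos\theta=\mathbf n\cdot\sigma$. The kernel is $B(z,\sigma)=\bar B(|z|,\cos\theta)$ with $\bar B\ge0$ Borel on $[0,\infty)\times[-1,1]$, $r\mapsto\bar B(r,t)$ continuous on $[0,\infty)$ for every $t\in(-1,1)$, and $\bar B(r,t)\le(1+r^2)^{\gamma/2}b(t)$ with $0<\gamma\le2$, $b\ge0$ Borel. (H0): $A_2:=|\mathbb S^{N-2}|\int_0^\pi b(\cos\theta)\sin^N\theta\,d\theta<\infty$ ($|\mathbb S^{N-2}|$ the surface measure of unit sphere of $\mathbb R^{N-1}$, $=2$ if $N=2$). For $\mathbf n\in\mathbb S^{N-1}$, $\mathbb S^{N-2}(\mathbf n)=\{\omega\in\mathbb S^{N-1}:\omega\cdot\mathbf n=0\}$ with surface measure $d\omega$ (two points with counting measure if $N=2$). $\Delta\varphi=\varphi(v')+\varphi(v_*')-\varphi(v)-\varphi(v_* )$ with $\sigma=\cos\theta\,\mathbf n+\sin\theta\,\omega$, and $L_B[\Delta\varphi](v,v_* )=\int_0^\pi\bar B(|v-v_*|,\cos\theta)\sin^{N-2}\theta(\int_{\mathbb S^{N-2}(\mathbf n)}\Delta\varphi\,d\omega)d\theta$;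 $L_{B_n}$ is defined the same way with $\bar B_n$. *)

theory Defs
  imports "HOL-Analysis.Analysis"
begin

text \<open>Dimension N = DIM('a) for a Euclidean space 'a.\<close>

definition proj_perp :: "'a::euclidean_space \<Rightarrow> 'a \<Rightarrow> 'a" where
  "proj_perp u x = x - (x \<bullet> u) *\<^sub>R u"

text \<open>Surface measure on the (N-2)-sphere S^{N-2}(u) = {w in S^{N-1}. w . u = 0}
  (for N = 2: counting measure on two points), defined as the cone measure:
  the measure of E is (N-1) times the (N-1)-dimensional Lebesgue measure of the unit
  cone over E inside the hyperplane u-perp; the latter is realised as the N-dimensional
  Lebesgue measure of that cone thickened by a slab of width 1 in direction u.\<close>
definition perp_sphere_measure :: "'a::euclidean_space \<Rightarrow> 'a measure" where
  "perp_sphere_measure u =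
     scale_measure (of_nat (DIM('a) - 1))
       (distr (restrict_space lborel
                 {x. 0 < norm (proj_perp u x) \<and> norm (proj_perp u x) \<le> 1 \<and> \<bar>x \<bullet> u\<bar> \<le> 1/2})
              borel (\<lambda>x. proj_perp u x /\<^sub>R norm (proj_perp u x)))"

definition coll_dir :: "'a::euclidean_space \<Rightarrow> 'a \<Rightarrow> 'a" where
  "coll_dir v vs = (if v = vs then (SOME e. e \<in> Basis) else (v - vs) /\<^sub>R norm (v - vs))"

definition Delta_phi :: "('a::euclidean_space \<Rightarrow> real) \<Rightarrow> 'a \<Rightarrow> 'a \<Rightarrow> real \<Rightarrow> 'a \<Rightarrow> real" where
  "Delta_phi phi v vs \<theta> \<omega> =
     (let \<sigma> = cos \<theta> *\<^sub>R coll_dir v vs + sin \<theta> *\<^sub>R \<omega>;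
          v' = (1/2) *\<^sub>R (v + vs) + (norm (v - vs) / 2) *\<^sub>R \<sigma>;
          vs' = (1/2) *\<^sub>R (v + vs) - (norm (v - vs) / 2) *\<^sub>R \<sigma>
      in phi v' + phi vs' - phi v - phi vs)"

definition L_op :: "(real \<Rightarrow> real \<Rightarrow> real) \<Rightarrow> ('a::euclidean_space \<Rightarrow> real) \<Rightarrow> 'a \<Rightarrow> 'a \<Rightarrow> real" where
  "L_op Bb phi v vs =
     set_lebesgue_integral lborel {0..pi}
       (\<lambda>\<theta>. Bb (norm (v - vs)) (cos \<theta>) * sin \<theta> ^ (DIM('a) - 2) *
              (\<integral>\<omega>. Delta_phi phi v vs \<theta> \<omega> \<partial>(perp_sphere_measure (coll_dir v vs))))"

definition C2_with :: "('a::euclidean_space \<Rightarrow> real) \<Rightarrow> ('a \<Rightarrow> 'a \<Rightarrow>\<^sub>L real)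
                        \<Rightarrow> ('a \<Rightarrow> 'a \<Rightarrow>\<^sub>L 'a \<Rightarrow>\<^sub>L real) \<Rightarrow> bool" where
  "C2_with phi D D2 \<longleftrightarrow>
     (\<forall>x. (phi has_derivative blinfun_apply (D x)) (at x)) \<and>
     (\<forall>x. (D has_derivative blinfun_apply (D2 x)) (at x)) \<and>
     continuous_on UNIV D2"

text \<open>Sum over |alpha| <= 2 of |partial^alpha phi (v)| (second-order terms over ordered pairs).\<close>
definition deriv_sum2 :: "('a::euclidean_space \<Rightarrow> real) \<Rightarrow> ('a \<Rightarrow> 'a \<Rightarrow>\<^sub>L real)
                        \<Rightarrow> ('a \<Rightarrow> 'a \<Rightarrow>\<^sub>L 'a \<Rightarrow>\<^sub>L real) \<Rightarrow> 'a \<Rightarrow> real" where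
  "deriv_sum2 phi D D2 v =
     \<bar>phi v\<bar> + (\<Sum>i\<in>Basis. \<bar>D v i\<bar>) + (\<Sum>i\<in>Basis. \<Sum>j\<in>Basis. \<bar>D2 v i j\<bar>)"

definition kernel_basic :: "(real \<Rightarrow> real \<Rightarrow> real) \<Rightarrow> bool" where
  "kernel_basic Bb \<longleftrightarrow>
     (\<lambda>p. Bb (fst p) (snd p)) \<in> borel_measurable (restrict_space borel ({0..} \<times> {-1..1})) \<and>
     (\<forall>r\<ge>0. \<forall>t\<in>{-1..1}. 0 \<le> Bb r t) \<and>
     (\<forall>t\<in>{-1<..<1}. continuous_on {0..} (\<lambda>r. Bb r t))"

end

theory Submission
  imports Defs
begin

(* The heart of the matter is a cancellation. Averaging Delta phi over omega and -omega removes
   the first-order Taylor terms, so for phi in C^2 the inner integral over S^{N-2}(n) is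
   O(|v - v_*|^2 sin^2 theta). Hence the theta-integrand of L_B is dominated by a constant times
   b(cos theta) sin^N theta, which is integrable by (H0), and every statement follows from
   dominated convergence:
   (I)   along (v_k, v_*k) -> (v, v_* ): on the diagonal by the quadratic decay, off it because the
         collision axis n then depends continuously on the velocities;
   (II)  pointwise, for kernels B_n increasing to B and test functions phi_n -> phi;
   (II') uniformly on bounded sets: the error is controlled by the gap integral
         G_k(r) = int (B - B_k)(r, cos theta) sin^N theta dtheta, which decreases to 0 and is
         continuous in r, so Dini's theorem makes the convergence uniform in r in [0, R]. *)

lemma proj_perp_measurable [measurable]: "proj_perp u \<in> borel_measurable borel"
  unfolding proj_perp_def by measurable

lemma proj_perp_tendsto [tendsto_intros]:
  "(f \<longlongrightarrow> a) F \<Longrightarrow> (g \<longlongrightarrow> b) F \<Longrightarrow> ((\<lambda>x. proj_perp (f x) (g x)) \<longlongrightarrow> proj_perp a b) F"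
  unfolding proj_perp_def by (intro tendsto_intros)

lemma linear_proj_perp: "linear (proj_perp u)"
  by (rule linearI) (simp_all add: proj_perp_def algebra_simps)

lemma proj_perp_uminus: "proj_perp u (- x) = - proj_perp u x"
  by (simp add: proj_perp_def)

lemma proj_perp_idem: "norm u = 1 \<Longrightarrow> proj_perp u (proj_perp u x) = proj_perp u x"
  by (simp add: proj_perp_def inner_diff_left norm_eq_1)

definition cone_slab :: "'a::euclidean_space \<Rightarrow> 'a set" where
  "cone_slab u = {x. 0 < norm (proj_perp u x) \<and> norm (proj_perp u x) \<le> 1 \<and> \<bar>x \<bullet> u\<bar> \<le> 1/2}"

definition sphere_proj :: "'a::euclidean_space \<Rightarrow> 'a \<Rightarrow> 'a" where
  "sphere_proj u x = proj_perp u x /\<^sub>R norm (proj_perp u x)"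

lemma cone_slab_sets [measurable]: "cone_slab u \<in> sets borel"
  unfolding cone_slab_def by measurable

lemma sphere_proj_measurable [measurable]: "sphere_proj u \<in> borel_measurable borel"
  unfolding sphere_proj_def by measurable

lemma norm_sphere_proj: "x \<in> cone_slab u \<Longrightarrow> norm (sphere_proj u x) = 1"
  by (auto simp: cone_slab_def sphere_proj_def)

lemma cone_slab_subset_cball:
  assumes "norm u = 1" "x \<in> cone_slab u"
  shows "x \<in> cball 0 2"
proof -
  have "x = proj_perp u x + (x \<bullet> u) *\<^sub>R u" by (simp add: proj_perp_def)
  then have "norm x \<le> norm (proj_perp u x) + norm ((x \<bullet> u) *\<^sub>R u)"
    by (metis norm_triangle_ineq)
  also have "\<dots> \<le> 1 + 1/2" using assms by (auto simp: cone_slab_def intro!: add_mono)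
  finally show ?thesis by simp
qed

lemma cone_slab_uminus: "- x \<in> cone_slab u \<longleftrightarrow> x \<in> cone_slab u"
  by (simp add: cone_slab_def proj_perp_uminus)

lemma sphere_proj_uminus: "sphere_proj u (- x) = - sphere_proj u x"
  by (simp add: sphere_proj_def proj_perp_uminus)

lemma sphere_proj_tendsto:
  assumes "U \<longlonglongrightarrow> u" and "proj_perp u x \<noteq> 0"
  shows "(\<lambda>k. sphere_proj (U k) x) \<longlonglongrightarrow> sphere_proj u x"
  unfolding sphere_proj_def divide_inverse_commute[symmetric] scaleR_conv_of_real
  using assms by (intro tendsto_intros) auto

lemma perp_sphere_measure_eq:
  "perp_sphere_measure u = density (distr (restrict_space lborel (cone_slab u)) borel (sphere_proj u))
                                   (\<lambda>_. ennreal (real (DIM('a) - 1)))"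
  for u :: "'a::euclidean_space"
proof (rule measure_eqI)
  fix A assume "A \<in> sets (perp_sphere_measure u)"
  then have "A \<in> sets borel" by (simp add: perp_sphere_measure_def)
  then show "emeasure (perp_sphere_measure u) A = emeasure (density (distr (restrict_space lborel
      (cone_slab u)) borel (sphere_proj u)) (\<lambda>_. ennreal (real (DIM('a) - 1)))) A"
    unfolding perp_sphere_measure_def cone_slab_def[symmetric] sphere_proj_def[symmetric]
    by (simp add: emeasure_density nn_integral_cmult_indicator ennreal_of_nat_eq_real_of_nat)
qed (simp add: perp_sphere_measure_def)

lemma integral_perp_sphere:
  fixes f :: "'a::euclidean_space \<Rightarrow> real"
  assumes [measurable]: "f \<in> borel_measurable borel"
  shows "integral\<^sup>L (perp_sphere_measure u) f
           = real (DIM('a) - 1) * (\<integral>x. indicator (cone_slab u) x * f (sphere_proj u x) \<partial>lborel)"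
proof -
  have "sphere_proj u \<in> measurable (restrict_space lborel (cone_slab u)) borel"
    by (intro measurable_restrict_space1) simp
  then show ?thesis
    by (simp add: perp_sphere_measure_eq integral_density integral_distr integral_restrict_space)
qed

lemma lborel_integral_uminus:
  fixes f :: "'a::euclidean_space \<Rightarrow> real"
  assumes [measurable]: "f \<in> borel_measurable borel"
  shows "(\<integral>x. f x \<partial>lborel) = (\<integral>x. f (- x) \<partial>lborel)"
proof -
  have "lborel = density (distr lborel borel (\<lambda>x::'a. 0 + (-1) *\<^sub>R x)) (\<lambda>_. \<bar>-1::real\<bar> ^ DIM('a))"
    by (rule lborel_affine) simp
  then have "lborel = distr lborel borel (\<lambda>x::'a. - x)" by (simp add: density_1)
  then have "(\<integral>x. f x \<partial>lborel) = (\<integral>x. f x \<partial>distr lborel borel (\<lambda>x::'a. - x))" by simp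
  also have "\<dots> = (\<integral>x. f (- x) \<partial>lborel)" by (rule integral_distr) auto
  finally show ?thesis .
qed

text \<open>The sphere measure is symmetric under \<open>\<omega> \<mapsto> -\<omega>\<close>; this is what makes the first-order
  Taylor terms of \<open>\<Delta>\<phi>\<close> cancel.\<close>
lemma integral_perp_sphere_uminus:
  fixes f :: "'a::euclidean_space \<Rightarrow> real"
  assumes [measurable]: "f \<in> borel_measurable borel"
  shows "integral\<^sup>L (perp_sphere_measure u) (\<lambda>w. f (- w)) = integral\<^sup>L (perp_sphere_measure u) f"
proof -
  have "(\<integral>x. indicator (cone_slab u) x * f (sphere_proj u x) \<partial>lborel)
      = (\<integral>x. indicator (cone_slab u) (- x) * f (sphere_proj u (- x)) \<partial>lborel)"
    by (rule lborel_integral_uminus) measurable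
  then show ?thesis
    by (simp add: integral_perp_sphere sphere_proj_uminus cone_slab_uminus indicator_def)
qed

text \<open>The unit sphere is nonempty, so a bound on it is nonnegative.\<close>
lemma bound_on_unit_sphere_nonneg:
  assumes "\<And>w::'a::euclidean_space. norm w = 1 \<Longrightarrow> \<bar>f w\<bar> \<le> (C::real)"
  shows "0 \<le> C"
proof -
  obtain e :: 'a where "e \<in> Basis" using nonempty_Basis by blast
  then show ?thesis using assms[of e] by simp
qed

lemma cone_slab_domination:
  fixes f :: "'a::euclidean_space \<Rightarrow> real"
  assumes "norm u = 1" and "\<And>w. norm w = 1 \<Longrightarrow> \<bar>f w\<bar> \<le> C"
  shows "\<bar>indicator (cone_slab u) x * f (sphere_proj u x)\<bar> \<le> indicator (cball 0 2) x * C"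
  using cone_slab_subset_cball[OF assms(1)] assms(2)[OF norm_sphere_proj]
    bound_on_unit_sphere_nonneg[OF assms(2)]
  by (auto simp: indicator_def)

lemma integrable_cball_const:
  "integrable lborel (\<lambda>x::'a::euclidean_space. indicator (cball 0 2) x * (C::real))"
  using emeasure_lborel_cball_finite[of "0::'a" 2]
  by (intro integrable_mult_left integrable_indicator) auto

lemma integrable_perp_sphere:
  fixes f :: "'a::euclidean_space \<Rightarrow> real"
  assumes [measurable]: "f \<in> borel_measurable borel"
    and "norm u = 1" and "\<And>w. norm w = 1 \<Longrightarrow> \<bar>f w\<bar> \<le> C"
  shows "integrable (perp_sphere_measure u) f"
proof -
  have "sphere_proj u \<in> measurable (restrict_space lborel (cone_slab u)) borel"
    by (intro measurable_restrict_space1) simp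
  moreover have "integrable lborel (\<lambda>x. indicator (cone_slab u) x * f (sphere_proj u x))"
    by (rule Bochner_Integration.integrable_bound[OF integrable_cball_const[of C]])
      (use cone_slab_domination[where f=f, OF assms(2,3)]
         bound_on_unit_sphere_nonneg[where f=f, OF assms(3)] in auto)
  ultimately show ?thesis
    by (simp add: perp_sphere_measure_eq integrable_density integrable_distr_eq
        integrable_restrict_space)
qed

text \<open>The total mass of \<open>perp_sphere_measure u\<close> is at most this constant, for every unit \<open>u\<close>.\<close>
definition sphere_mass_bound :: "'a::euclidean_space itself \<Rightarrow> real" where
  "sphere_mass_bound _ = real (DIM('a) - 1) * measure lborel (cball (0::'a) 2)"

lemma sphere_mass_bound_nonneg: "0 \<le> sphere_mass_bound TYPE('a::euclidean_space)"
  by (simp add: sphere_mass_bound_def)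

lemma abs_integral_perp_sphere_le:
  fixes f :: "'a::euclidean_space \<Rightarrow> real"
  assumes [measurable]: "f \<in> borel_measurable borel"
    and u: "norm u = 1" and C: "\<And>w. norm w = 1 \<Longrightarrow> \<bar>f w\<bar> \<le> C"
  shows "\<bar>integral\<^sup>L (perp_sphere_measure u) f\<bar> \<le> sphere_mass_bound TYPE('a) * C"
proof -
  have "\<bar>\<integral>x. indicator (cone_slab u) x * f (sphere_proj u x) \<partial>lborel\<bar>
      \<le> (\<integral>x. \<bar>indicator (cone_slab u) x * f (sphere_proj u x)\<bar> \<partial>lborel)"
    by (rule integral_abs_bound)
  also have "\<dots> \<le> (\<integral>x. indicator (cball (0::'a) 2) x * C \<partial>lborel)"
    by (rule integral_mono'[OF integrable_cball_const])
      (use cone_slab_domination[where f=f, OF u C] bound_on_unit_sphere_nonneg[where f=f, OF C] in auto)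
  also have "\<dots> = measure lborel (cball (0::'a) 2) * C" by simp
  finally have "real (DIM('a) - 1) * \<bar>\<integral>x. indicator (cone_slab u) x * f (sphere_proj u x) \<partial>lborel\<bar>
      \<le> real (DIM('a) - 1) * (measure lborel (cball (0::'a) 2) * C)"
    by (rule mult_left_mono) simp
  then show ?thesis
    by (simp only: integral_perp_sphere[OF assms(1)] sphere_mass_bound_def abs_mult abs_of_nat
        mult.assoc)
qed

text \<open>Points where membership in the cone slab, or the radial projection, may fail to depend
  continuously on the axis \<open>u\<close>: the axis line, the two slab faces, and the cone boundary.\<close>
definition axis_exceptional :: "'a::euclidean_space \<Rightarrow> 'a set" where
  "axis_exceptional u = {x. proj_perp u x = 0} \<union> {x. u \<bullet> x = 1/2} \<union> {x. u \<bullet> x = -1/2}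
                         \<union> {x. norm (proj_perp u x) = 1}"

text \<open>The cylinder boundary \<open>{|proj_perp u x| = 1}\<close> is null: it lies in the frontier of a
  convex set.\<close>
lemma negligible_cone_boundary:
  assumes u: "norm u = 1"
  shows "negligible {x::'a::euclidean_space. norm (proj_perp u x) = 1}"
proof -
  define T where "T = proj_perp u -` cball 0 1"
  have "convex T"
    unfolding T_def by (rule convex_linear_vimage[OF linear_proj_perp convex_cball])
  moreover have "{x. norm (proj_perp u x) = 1} \<subseteq> frontier T"
  proof
    fix x assume x: "x \<in> {x. norm (proj_perp u x) = 1}"
    then have "x \<in> closure T" using closure_subset by (force simp: T_def)
    moreover have "x \<notin> interior T"
    proof
      assume "x \<in> interior T"
      then obtain e where e: "e > 0" "ball x e \<subseteq> T" by (auto simp: mem_interior)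
      define y where "y = x + (e/2) *\<^sub>R proj_perp u x"
      have "y \<in> T" using x e by (intro subsetD[OF e(2)]) (simp add: y_def dist_norm)
      moreover have "proj_perp u y = (1 + e/2) *\<^sub>R proj_perp u x"
        using proj_perp_idem[OF u, of x] linear_proj_perp[of u]
        by (simp add: y_def linear_add linear_scale algebra_simps)
      ultimately show False using x e by (simp add: T_def)
    qed
    ultimately show "x \<in> frontier T" by (simp add: frontier_def)
  qed
  ultimately show ?thesis by (rule negligible_subset[OF negligible_convex_frontier])
qed

text \<open>The axis line is lower-dimensional (here \<open>N \<ge> 2\<close> is used) and the other pieces are
  hyperplanes or the cylinder boundary.\<close>
lemma axis_exceptional_null:
  fixes u :: "'a::euclidean_space"
  assumes u: "norm u = 1" and dim: "DIM('a) \<ge> 2"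
  shows "axis_exceptional u \<in> null_sets lborel"
proof -
  have u0: "u \<noteq> 0" using u by auto
  have "{x. proj_perp u x = 0} \<subseteq> span {u}"
  proof
    fix x assume "x \<in> {x. proj_perp u x = 0}"
    then have "x = (x \<bullet> u) *\<^sub>R u" by (simp add: proj_perp_def)
    then show "x \<in> span {u}" by (metis span_base span_mul singletonI)
  qed
  moreover have "negligible (span {u})" by (rule negligible_lowdim) (use dim u0 in simp)
  ultimately have "negligible {x. proj_perp u x = 0}" by (rule negligible_subset[rotated])
  moreover have "negligible {x. u \<bullet> x = 1/2}" "negligible {x. u \<bullet> x = -1/2}"
    using u0 by (intro negligible_hyperplane; simp)+
  ultimately have "negligible (axis_exceptional u)"
    unfolding axis_exceptional_def using negligible_cone_boundary[OF u] by simp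
  moreover have "axis_exceptional u \<in> sets borel"
    unfolding axis_exceptional_def by measurable
  ultimately show ?thesis
    by (metis negligible_iff_null_sets null_sets_completion_iff sets_lborel)
qed

lemma cone_slab_indicator_tendsto:
  assumes U: "U \<longlonglongrightarrow> u" and x: "x \<notin> axis_exceptional u"
  shows "eventually (\<lambda>k. indicator (cone_slab (U k)) x = (indicator (cone_slab u) x :: real))
           sequentially"
proof -
  have p0: "0 < norm (proj_perp u x)" and n1: "norm (proj_perp u x) \<noteq> 1"
    and i: "\<bar>x \<bullet> u\<bar> \<noteq> 1/2"
    using x by (auto simp: axis_exceptional_def inner_commute abs_if)
  have tn: "(\<lambda>k. norm (proj_perp (U k) x)) \<longlonglongrightarrow> norm (proj_perp u x)"
    and ti: "(\<lambda>k. \<bar>x \<bullet> U k\<bar>) \<longlonglongrightarrow> \<bar>x \<bullet> u\<bar>"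
    by (intro tendsto_intros U)+
  have ev0: "eventually (\<lambda>k. 0 < norm (proj_perp (U k) x)) sequentially"
    by (rule order_tendstoD(1)[OF tn p0])
  show ?thesis
  proof (cases "x \<in> cone_slab u")
    case True
    then have "norm (proj_perp u x) < 1" and "\<bar>x \<bullet> u\<bar> < 1/2"
      using n1 i by (auto simp: cone_slab_def)
    from ev0 order_tendstoD(2)[OF tn this(1)] order_tendstoD(2)[OF ti this(2)]
    have "eventually (\<lambda>k. x \<in> cone_slab (U k)) sequentially"
      by eventually_elim (simp add: cone_slab_def)
    then show ?thesis by eventually_elim (simp add: True)
  next
    case False
    then have "1 < norm (proj_perp u x) \<or> 1/2 < \<bar>x \<bullet> u\<bar>"
      using n1 i p0 by (auto simp: cone_slab_def)
    then have "eventually (\<lambda>k. x \<notin> cone_slab (U k)) sequentially"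
    proof
      assume "1 < norm (proj_perp u x)"
      from order_tendstoD(1)[OF tn this] show ?thesis by eventually_elim (auto simp: cone_slab_def)
    next
      assume "1/2 < \<bar>x \<bullet> u\<bar>"
      from order_tendstoD(1)[OF ti this] show ?thesis by eventually_elim (auto simp: cone_slab_def)
    qed
    then show ?thesis by eventually_elim (simp add: False)
  qed
qed

lemma integral_perp_sphere_tendsto:
  fixes U :: "nat \<Rightarrow> 'a::euclidean_space" and H :: "nat \<Rightarrow> 'a \<Rightarrow> real"
  assumes dim: "DIM('a) \<ge> 2"
    and U: "U \<longlonglongrightarrow> u" and u: "norm u = 1" and U_unit: "\<And>k. norm (U k) = 1"
    and [measurable]: "\<And>k. H k \<in> borel_measurable borel" "h \<in> borel_measurable borel"
    and bound: "\<And>k w. norm w = 1 \<Longrightarrow> \<bar>H k w\<bar> \<le> C"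
    and conv: "\<And>x. proj_perp u x \<noteq> 0 \<Longrightarrow> (\<lambda>k. H k (sphere_proj (U k) x)) \<longlonglongrightarrow> h (sphere_proj u x)"
  shows "(\<lambda>k. integral\<^sup>L (perp_sphere_measure (U k)) (H k)) \<longlonglongrightarrow> integral\<^sup>L (perp_sphere_measure u) h"
proof -
  have "(\<lambda>k. \<integral>x. indicator (cone_slab (U k)) x * H k (sphere_proj (U k) x) \<partial>lborel)
          \<longlonglongrightarrow> (\<integral>x. indicator (cone_slab u) x * h (sphere_proj u x) \<partial>lborel)"
  proof (rule integral_dominated_convergence[OF _ _ integrable_cball_const[of C]])
    show "AE x in lborel. norm (indicator (cone_slab (U k)) x * H k (sphere_proj (U k) x))
                            \<le> indicator (cball 0 2) x * C" for k
      using cone_slab_domination[where f="H k", OF U_unit bound] by simp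
    show "AE x in lborel. (\<lambda>k. indicator (cone_slab (U k)) x * H k (sphere_proj (U k) x))
                            \<longlonglongrightarrow> indicator (cone_slab u) x * h (sphere_proj u x)"
      using AE_not_in[OF axis_exceptional_null[OF u dim]]
    proof eventually_elim
      fix x assume x: "x \<notin> axis_exceptional u"
      then have "proj_perp u x \<noteq> 0" by (simp add: axis_exceptional_def)
      then have "(\<lambda>k. indicator (cone_slab u) x * H k (sphere_proj (U k) x))
                   \<longlonglongrightarrow> indicator (cone_slab u) x * h (sphere_proj u x)"
        by (intro tendsto_mult tendsto_const conv)
      then show "(\<lambda>k. indicator (cone_slab (U k)) x * H k (sphere_proj (U k) x))
                   \<longlonglongrightarrow> indicator (cone_slab u) x * h (sphere_proj u x)"
        by (rule Lim_transform_eventually)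
          (use cone_slab_indicator_tendsto[OF U x] in \<open>auto elim: eventually_mono\<close>)
    qed
  qed simp_all
  then show ?thesis by (simp add: integral_perp_sphere tendsto_mult_left)
qed

lemma derivative_lipschitz:
  fixes D :: "'a::real_normed_vector \<Rightarrow> 'a \<Rightarrow>\<^sub>L real"
  assumes dD: "\<forall>x. (D has_derivative blinfun_apply (D2 x)) (at x)"
    and K: "\<forall>z\<in>S. norm (D2 z) \<le> K" and S: "convex S" and xy: "x \<in> S" "y \<in> S"
  shows "norm (D y - D x) \<le> K * norm (y - x)"
  using differentiable_bound[OF S, of D "\<lambda>z. blinfun_apply (D2 z)" K y x] dD K xy
  by (auto simp: norm_blinfun.rep_eq[symmetric] intro: has_derivative_at_withinI)

lemma taylor_first_order:
  fixes phi :: "'a::real_normed_vector \<Rightarrow> real"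
  assumes dphi: "\<forall>x. (phi has_derivative blinfun_apply (D x)) (at x)"
    and dD: "\<forall>x. (D has_derivative blinfun_apply (D2 x)) (at x)"
    and K: "\<forall>z\<in>S. norm (D2 z) \<le> K" and S: "convex S" and xh: "x \<in> S" "x + h \<in> S"
  shows "\<bar>phi (x + h) - phi x - D x h\<bar> \<le> K * norm h ^ 2"
proof -
  let ?f = "\<lambda>z. phi z - D x z"
  have K0: "0 \<le> K" using K xh by (meson norm_ge_zero order_trans)
  have seg: "closed_segment x (x + h) \<subseteq> S" using S xh by (simp add: closed_segment_subset)
  have "(?f has_derivative blinfun_apply (D z - D x)) (at z within closed_segment x (x + h))" for z
  proof -
    have "(?f has_derivative (\<lambda>k. D z k - D x k)) (at z)"
      using dphi by (intro has_derivative_diff bounded_linear_imp_has_derivative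
          blinfun.bounded_linear_right) auto
    moreover have "blinfun_apply (D z - D x) = (\<lambda>k. D z k - D x k)"
      by (rule ext) (simp add: blinfun.diff_left)
    ultimately show ?thesis by (simp add: has_derivative_at_withinI)
  qed
  moreover have "onorm (blinfun_apply (D z - D x)) \<le> K * norm h"
    if z: "z \<in> closed_segment x (x + h)" for z
  proof -
    have "onorm (blinfun_apply (D z - D x)) \<le> K * norm (z - x)"
      using derivative_lipschitz[OF dD K S xh(1)] seg z by (auto simp: norm_blinfun.rep_eq)
    also have "\<dots> \<le> K * norm h"
      using segment_bound1[OF z] K0 by (simp add: mult_left_mono)
    finally show ?thesis .
  qed
  ultimately have "norm (?f (x + h) - ?f x) \<le> K * norm h * norm (x + h - x)"
    by (intro differentiable_bound[OF convex_closed_segment]) auto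
  then show ?thesis by (simp add: blinfun.add_right power2_eq_square algebra_simps)
qed

text \<open>Expanding \<open>\<phi>\<close> to first order around two base points \<open>P\<close>, \<open>Q\<close> with opposite increments:
  the linear terms combine to \<open>(D P - D Q)(x + y)\<close>, which is small by the Lipschitz bound.\<close>
lemma four_point_taylor:
  fixes phi :: "'a::real_normed_vector \<Rightarrow> real"
  assumes dphi: "\<forall>x. (phi has_derivative blinfun_apply (D x)) (at x)"
    and dD: "\<forall>x. (D has_derivative blinfun_apply (D2 x)) (at x)"
    and K: "\<forall>z\<in>S. norm (D2 z) \<le> K" and S: "convex S"
    and in_S: "P \<in> S" "Q \<in> S" "P + x \<in> S" "P + y \<in> S" "Q + - x \<in> S" "Q + - y \<in> S"
  shows "\<bar>phi (P + x) + phi (P + y) + phi (Q + - x) + phi (Q + - y) - 2 * phi P - 2 * phi Q\<bar>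
           \<le> K * (2 * (norm x ^ 2 + norm y ^ 2) + norm (P - Q) * norm (x + y))"
proof -
  note taylor = taylor_first_order[OF dphi dD K S]
  have "\<bar>(D P - D Q) (x + y)\<bar> \<le> norm (D P - D Q) * norm (x + y)"
    using norm_blinfun[of "D P - D Q" "x + y"] by simp
  also have "\<dots> \<le> K * norm (P - Q) * norm (x + y)"
    by (intro mult_right_mono derivative_lipschitz[OF dD K S in_S(2,1)]) simp
  finally have "\<bar>D P x + D P y - D Q x - D Q y\<bar> \<le> K * norm (P - Q) * norm (x + y)"
    by (simp add: blinfun.add_right blinfun.diff_left)
  then show ?thesis
    using taylor[OF in_S(1,3)] taylor[OF in_S(1,4)] taylor[OF in_S(2,5)] taylor[OF in_S(2,6)]
    by (simp add: blinfun.minus_right algebra_simps abs_le_iff)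
qed

lemma unit_circle_bounds:
  assumes "c\<^sup>2 + s\<^sup>2 = (1::real)"
  shows "c \<le> 1" and "\<bar>s\<bar> \<le> 1"
proof -
  have "c\<^sup>2 \<le> 1" "s\<^sup>2 \<le> 1" using assms zero_le_power2[of c] zero_le_power2[of s] by linarith+
  then show "c \<le> 1" "\<bar>s\<bar> \<le> 1" by (simp_all add: abs_square_le_1 abs_le_iff)
qed

text \<open>A point \<open>c u + t w\<close> (\<open>|t| = |s|\<close>, \<open>c\<^sup>2 + s\<^sup>2 = 1\<close>) deviates from the axis \<open>u\<close> by
  \<open>O(\<surd>(1 - c))\<close>; this is what makes the Taylor remainders of order \<open>1 - c\<close>.\<close>
lemma circle_point_deviation:
  fixes u w :: "'a::real_normed_vector"
  assumes u: "norm u = 1" and w: "norm w \<le> 1" and cs: "c\<^sup>2 + s\<^sup>2 = 1" and t: "\<bar>t\<bar> = \<bar>s\<bar>"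
  shows "norm (c *\<^sub>R u + t *\<^sub>R w - u) ^ 2 \<le> 4 * (1 - c)"
proof -
  have c1: "c \<le> 1" by (rule unit_circle_bounds[OF cs])
  have "c *\<^sub>R u + t *\<^sub>R w - u = (c - 1) *\<^sub>R u + t *\<^sub>R w" by (simp add: algebra_simps)
  then have "norm (c *\<^sub>R u + t *\<^sub>R w - u) \<le> norm ((c - 1) *\<^sub>R u) + norm (t *\<^sub>R w)"
    by (metis norm_triangle_ineq)
  also have "\<dots> \<le> (1 - c) + \<bar>s\<bar>" using u w c1 t by (simp add: mult_left_le)
  finally have "norm (c *\<^sub>R u + t *\<^sub>R w - u) ^ 2 \<le> ((1 - c) + \<bar>s\<bar>)\<^sup>2" by (simp add: power_mono)
  also have "\<dots> \<le> 2 * ((1 - c)\<^sup>2 + \<bar>s\<bar>\<^sup>2)"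
    using sum_squares_bound[of "1 - c" "\<bar>s\<bar>"] by (simp add: power2_sum)
  also have "(1 - c)\<^sup>2 + \<bar>s\<bar>\<^sup>2 = 2 * (1 - c)" using cs by (simp add: power2_diff algebra_simps)
  finally show ?thesis by simp
qed

lemma shifted_point_in_cball:
  assumes "norm m + 2 * h \<le> \<rho>" and "\<bar>t\<bar> \<le> h" and "norm z \<le> 2"
  shows "m + t *\<^sub>R z \<in> cball 0 \<rho>"
proof -
  have "norm (t *\<^sub>R z) \<le> h * 2" using assms(2,3) by (simp add: mult_mono)
  then show ?thesis using assms(1) by (simp add: order_trans[OF norm_triangle_ineq])
qed

lemma collision_points_in_cball:
  fixes u w :: "'a::real_normed_vector"
  assumes u: "norm u = 1" and w: "norm w \<le> 1" and cs: "c\<^sup>2 + s\<^sup>2 = 1"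
    and h: "0 \<le> h" and rho: "norm m + 2 * h \<le> \<rho>"
  shows "m + h *\<^sub>R u \<in> cball 0 \<rho>" "m - h *\<^sub>R u \<in> cball 0 \<rho>"
    "m + h *\<^sub>R (c *\<^sub>R u + s *\<^sub>R w) \<in> cball 0 \<rho>" "m + h *\<^sub>R (c *\<^sub>R u - s *\<^sub>R w) \<in> cball 0 \<rho>"
    "m - h *\<^sub>R (c *\<^sub>R u + s *\<^sub>R w) \<in> cball 0 \<rho>" "m - h *\<^sub>R (c *\<^sub>R u - s *\<^sub>R w) \<in> cball 0 \<rho>"
proof -
  have "\<bar>c\<bar> \<le> 1" "\<bar>s\<bar> \<le> 1"
    using unit_circle_bounds[OF cs] unit_circle_bounds[of "- c" s] cs by auto
  then have sigma: "norm (c *\<^sub>R u + t *\<^sub>R w) \<le> 2" if "\<bar>t\<bar> \<le> 1" for t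
    using u mult_le_one[OF that _ w] by (intro order_trans[OF norm_triangle_ineq]) simp
  have "norm (c *\<^sub>R u + s *\<^sub>R w) \<le> 2" "norm (c *\<^sub>R u - s *\<^sub>R w) \<le> 2"
    using sigma[of s] sigma[of "- s"] \<open>\<bar>s\<bar> \<le> 1\<close> by simp_all
  then show "m + h *\<^sub>R u \<in> cball 0 \<rho>" "m - h *\<^sub>R u \<in> cball 0 \<rho>"
    "m + h *\<^sub>R (c *\<^sub>R u + s *\<^sub>R w) \<in> cball 0 \<rho>" "m + h *\<^sub>R (c *\<^sub>R u - s *\<^sub>R w) \<in> cball 0 \<rho>"
    "m - h *\<^sub>R (c *\<^sub>R u + s *\<^sub>R w) \<in> cball 0 \<rho>" "m - h *\<^sub>R (c *\<^sub>R u - s *\<^sub>R w) \<in> cball 0 \<rho>"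
    using shifted_point_in_cball[OF rho, of h] shifted_point_in_cball[OF rho, of "- h"] u h
    by simp_all
qed

text \<open>The symmetrised post-collisional difference: for \<open>\<sigma>\<^sub>\<plusminus> = c u \<plusminus> s w\<close> on the circle
  \<open>c\<^sup>2 + s\<^sup>2 = 1\<close> with \<open>c \<ge> 0\<close>, the four-point Taylor expansion around \<open>m \<plusminus> h u\<close> gives
  a bound of order \<open>h\<^sup>2 (1 - c) \<le> h\<^sup>2 s\<^sup>2\<close>.\<close>
lemma symmetric_difference_bound_pos:
  fixes phi :: "'a::real_normed_vector \<Rightarrow> real"
  assumes dphi: "\<forall>x. (phi has_derivative blinfun_apply (D x)) (at x)"
    and dD: "\<forall>x. (D has_derivative blinfun_apply (D2 x)) (at x)"
    and K: "\<forall>z\<in>cball 0 \<rho>. norm (D2 z) \<le> K"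
    and u: "norm u = 1" and w: "norm w \<le> 1" and cs: "c\<^sup>2 + s\<^sup>2 = 1" and c0: "0 \<le> c"
    and h: "0 \<le> h" and rho: "norm m + 2 * h \<le> \<rho>"
  shows "\<bar>phi (m + h *\<^sub>R (c *\<^sub>R u + s *\<^sub>R w)) + phi (m + h *\<^sub>R (c *\<^sub>R u - s *\<^sub>R w))
          + phi (m - h *\<^sub>R (c *\<^sub>R u + s *\<^sub>R w)) + phi (m - h *\<^sub>R (c *\<^sub>R u - s *\<^sub>R w))
          - 2 * phi (m + h *\<^sub>R u) - 2 * phi (m - h *\<^sub>R u)\<bar> \<le> 20 * K * h\<^sup>2 * s\<^sup>2"
proof -
  note c1 = unit_circle_bounds(1)[OF cs]
  have "c\<^sup>2 \<le> c" using c0 c1 by (simp add: power2_eq_square mult_left_le)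
  then have one_minus_c: "1 - c \<le> s\<^sup>2" using cs by linarith
  have K0: "0 \<le> K"
    using K collision_points_in_cball(1)[OF u w cs h rho] by (meson norm_ge_zero order_trans)
  define x where "x = h *\<^sub>R (c *\<^sub>R u + s *\<^sub>R w - u)"
  define y where "y = h *\<^sub>R (c *\<^sub>R u + (- s) *\<^sub>R w - u)"
  have deviation: "norm (h *\<^sub>R (c *\<^sub>R u + t *\<^sub>R w - u)) ^ 2 \<le> h\<^sup>2 * (4 * (1 - c))"
    if "\<bar>t\<bar> = \<bar>s\<bar>" for t
  proof -
    have "norm (h *\<^sub>R (c *\<^sub>R u + t *\<^sub>R w - u)) ^ 2 = h\<^sup>2 * norm (c *\<^sub>R u + t *\<^sub>R w - u) ^ 2"
      by (simp only: norm_scaleR power_mult_distrib power2_abs)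
    also have "\<dots> \<le> h\<^sup>2 * (4 * (1 - c))"
      by (rule mult_left_mono[OF circle_point_deviation[OF u w cs that]]) simp
    finally show ?thesis .
  qed
  have norm_xy: "norm x ^ 2 \<le> h\<^sup>2 * (4 * (1 - c))" "norm y ^ 2 \<le> h\<^sup>2 * (4 * (1 - c))"
    unfolding x_def y_def by (rule deviation; simp)+
  have "x + y = (2 * h * (c - 1)) *\<^sub>R u"
    unfolding x_def y_def by (simp add: algebra_simps flip: scaleR_2)
  then have norm_sum: "norm (x + y) = 2 * h * (1 - c)" using u h c1 by (simp add: abs_mult)
  have norm_base: "norm ((m + h *\<^sub>R u) - (m - h *\<^sub>R u)) = 2 * h"
    using u h by (simp flip: scaleR_2 scaleR_add_right)
  have points: "m + h *\<^sub>R u + x = m + h *\<^sub>R (c *\<^sub>R u + s *\<^sub>R w)"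
    "m + h *\<^sub>R u + y = m + h *\<^sub>R (c *\<^sub>R u - s *\<^sub>R w)"
    "m - h *\<^sub>R u + - x = m - h *\<^sub>R (c *\<^sub>R u + s *\<^sub>R w)"
    "m - h *\<^sub>R u + - y = m - h *\<^sub>R (c *\<^sub>R u - s *\<^sub>R w)"
    by (simp_all add: x_def y_def algebra_simps)
  from collision_points_in_cball[OF u w cs h rho]
  have "\<bar>phi (m + h *\<^sub>R (c *\<^sub>R u + s *\<^sub>R w)) + phi (m + h *\<^sub>R (c *\<^sub>R u - s *\<^sub>R w))
          + phi (m - h *\<^sub>R (c *\<^sub>R u + s *\<^sub>R w)) + phi (m - h *\<^sub>R (c *\<^sub>R u - s *\<^sub>R w))
          - 2 * phi (m + h *\<^sub>R u) - 2 * phi (m - h *\<^sub>R u)\<bar>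
      \<le> K * (2 * (norm x ^ 2 + norm y ^ 2) + norm ((m + h *\<^sub>R u) - (m - h *\<^sub>R u)) * norm (x + y))"
    unfolding points[symmetric] by (rule four_point_taylor[OF dphi dD K convex_cball])
  also have "\<dots> \<le> K * (2 * (h\<^sup>2 * (4 * (1 - c)) + h\<^sup>2 * (4 * (1 - c))) + 2 * h * (2 * h * (1 - c)))"
    unfolding norm_sum norm_base using norm_xy K0 by (intro mult_left_mono add_mono order_refl) auto
  also have "\<dots> = 20 * K * h\<^sup>2 * (1 - c)" by (simp add: power2_eq_square algebra_simps)
  also have "\<dots> \<le> 20 * K * h\<^sup>2 * s\<^sup>2" using one_minus_c K0 by (simp add: mult_left_mono)
  finally show ?thesis .
qed

text \<open>The same bound without a sign condition on \<open>c\<close>: for \<open>c < 0\<close> expand around the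
  swapped base points, i.e. replace \<open>(u, c)\<close> by \<open>(-u, -c)\<close>.\<close>
lemma symmetric_difference_bound:
  fixes phi :: "'a::real_normed_vector \<Rightarrow> real"
  assumes dphi: "\<forall>x. (phi has_derivative blinfun_apply (D x)) (at x)"
    and dD: "\<forall>x. (D has_derivative blinfun_apply (D2 x)) (at x)"
    and K: "\<forall>z\<in>cball 0 \<rho>. norm (D2 z) \<le> K"
    and u: "norm u = 1" and w: "norm w \<le> 1" and cs: "c\<^sup>2 + s\<^sup>2 = 1"
    and h: "0 \<le> h" and rho: "norm m + 2 * h \<le> \<rho>"
  shows "\<bar>phi (m + h *\<^sub>R (c *\<^sub>R u + s *\<^sub>R w)) + phi (m + h *\<^sub>R (c *\<^sub>R u - s *\<^sub>R w))
          + phi (m - h *\<^sub>R (c *\<^sub>R u + s *\<^sub>R w)) + phi (m - h *\<^sub>R (c *\<^sub>R u - s *\<^sub>R w))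
          - 2 * phi (m + h *\<^sub>R u) - 2 * phi (m - h *\<^sub>R u)\<bar> \<le> 20 * K * h\<^sup>2 * s\<^sup>2"
proof (cases "0 \<le> c")
  case True
  then show ?thesis by (rule symmetric_difference_bound_pos[OF dphi dD K u w cs _ h rho])
next
  case False
  have "norm (- u) = 1" "(- c)\<^sup>2 + s\<^sup>2 = 1" using u cs by simp_all
  from symmetric_difference_bound_pos[OF dphi dD K this(1) w this(2) _ h rho] False
  show ?thesis by (simp add: algebra_simps)
qed

text \<open>\<open>\<Delta>\<phi>\<close> for an explicitly given axis \<open>u\<close> in place of \<open>n = coll_dir v v\<^sub>*\<close>; needed to pass
  to the limit along sequences of axes.\<close>
definition Delta_dir :: "('a::euclidean_space \<Rightarrow> real) \<Rightarrow> 'a \<Rightarrow> 'a \<Rightarrow> 'a \<Rightarrow> real \<Rightarrow> 'a \<Rightarrow> real" where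
  "Delta_dir phi v vs u \<theta> \<omega> =
     (let \<sigma> = cos \<theta> *\<^sub>R u + sin \<theta> *\<^sub>R \<omega>;
          v' = (1/2) *\<^sub>R (v + vs) + (norm (v - vs) / 2) *\<^sub>R \<sigma>;
          vs' = (1/2) *\<^sub>R (v + vs) - (norm (v - vs) / 2) *\<^sub>R \<sigma>
      in phi v' + phi vs' - phi v - phi vs)"

lemma Delta_phi_eq_Delta_dir: "Delta_phi phi v vs \<theta> = Delta_dir phi v vs (coll_dir v vs) \<theta>"
  by (rule ext) (simp add: Delta_phi_def Delta_dir_def)

lemma Delta_dir_diagonal: "Delta_dir phi v v u \<theta> = (\<lambda>w. 0)"
  by (rule ext) (simp add: Delta_dir_def flip: scaleR_2)

lemma norm_coll_dir: "norm (coll_dir v vs) = 1"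
proof (cases "v = vs")
  case True
  have "(SOME e. e \<in> (Basis::'a set)) \<in> Basis" by (rule someI_ex) (use nonempty_Basis in blast)
  then show ?thesis using True by (simp add: coll_dir_def)
qed (simp add: coll_dir_def)

lemma Delta_phi_symmetric_bound:
  fixes phi :: "'a::euclidean_space \<Rightarrow> real"
  assumes dphi: "\<forall>x. (phi has_derivative blinfun_apply (D x)) (at x)"
    and dD: "\<forall>x. (D has_derivative blinfun_apply (D2 x)) (at x)"
    and K: "\<forall>z\<in>cball 0 (2 * (norm v + norm vs)). norm (D2 z) \<le> K"
    and w: "norm w \<le> 1"
  shows "\<bar>Delta_phi phi v vs \<theta> w + Delta_phi phi v vs \<theta> (- w)\<bar> \<le> 5 * K * norm (v - vs) ^ 2 * sin \<theta> ^ 2"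
proof (cases "v = vs")
  case True
  then show ?thesis by (simp add: Delta_phi_eq_Delta_dir Delta_dir_diagonal)
next
  case False
  define m where "m = (1/2) *\<^sub>R (v + vs)"
  define h where "h = norm (v - vs) / 2"
  define u where "u = coll_dir v vs"
  have hu: "h *\<^sub>R u = (1/2) *\<^sub>R (v - vs)" using False by (simp add: h_def u_def coll_dir_def)
  have v: "v = m + h *\<^sub>R u" and vs: "vs = m - h *\<^sub>R u"
    unfolding hu m_def by (simp_all add: algebra_simps flip: scaleR_add_left)
  have rho: "norm m + 2 * h \<le> 2 * (norm v + norm vs)"
    using norm_triangle_ineq[of v vs] norm_triangle_ineq4[of v vs]
    by (simp add: m_def h_def) (use norm_ge_zero[of v] norm_ge_zero[of vs] in linarith)
  have h0: "0 \<le> h" and cs: "(cos \<theta>)\<^sup>2 + (sin \<theta>)\<^sup>2 = 1" by (simp_all add: h_def)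
  have "\<bar>phi (m + h *\<^sub>R (cos \<theta> *\<^sub>R u + sin \<theta> *\<^sub>R w)) + phi (m + h *\<^sub>R (cos \<theta> *\<^sub>R u - sin \<theta> *\<^sub>R w))
         + phi (m - h *\<^sub>R (cos \<theta> *\<^sub>R u + sin \<theta> *\<^sub>R w)) + phi (m - h *\<^sub>R (cos \<theta> *\<^sub>R u - sin \<theta> *\<^sub>R w))
         - 2 * phi v - 2 * phi vs\<bar> \<le> 20 * K * h\<^sup>2 * (sin \<theta>)\<^sup>2"
    using symmetric_difference_bound[OF dphi dD K norm_coll_dir[of v vs, folded u_def] w cs h0 rho]
    unfolding v[symmetric] vs[symmetric] .
  moreover have "20 * K * h\<^sup>2 = 5 * K * norm (v - vs) ^ 2" by (simp add: h_def power_divide)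
  ultimately show ?thesis
    by (simp add: Delta_phi_def Let_def flip: m_def h_def u_def v vs)
qed

lemma C2_with_continuous:
  "\<forall>x. (phi has_derivative blinfun_apply (D x)) (at x) \<Longrightarrow> continuous_on UNIV phi"
  by (intro continuous_at_imp_continuous_on ballI has_derivative_continuous) auto

lemma bounded_on_cball:
  fixes f :: "'a::euclidean_space \<Rightarrow> real"
  assumes "continuous_on UNIV f"
  obtains M where "\<forall>z\<in>cball 0 \<rho>. \<bar>f z\<bar> \<le> M"
proof -
  have "bounded (f ` cball 0 \<rho>)"
    by (rule compact_imp_bounded[OF compact_continuous_image])
      (use assms continuous_on_subset in auto)
  then show ?thesis using that by (auto simp: bounded_iff)
qed

lemma cball_bound_nonneg:
  assumes "\<forall>z\<in>cball (0::'a::real_normed_vector) \<rho>. norm (f z) \<le> (K::real)" and "0 \<le> \<rho>"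
  shows "0 \<le> K"
  using assms by (meson centre_in_cball norm_ge_zero order_trans)

lemma Delta_dir_continuous:
  assumes "continuous_on UNIV phi"
  shows "continuous_on UNIV (Delta_dir phi v vs u \<theta>)"
  unfolding Delta_dir_def Let_def
  by (intro continuous_intros continuous_on_compose2[OF assms]) auto

lemma Delta_dir_measurable [measurable]:
  "continuous_on UNIV phi \<Longrightarrow> Delta_dir phi v vs u \<theta> \<in> borel_measurable borel"
  by (rule borel_measurable_continuous_onI[OF Delta_dir_continuous])

lemma Delta_dir_tendsto:
  fixes phi :: "'a::euclidean_space \<Rightarrow> real"
  assumes phi: "continuous_on UNIV phi"
    and lim: "V \<longlonglongrightarrow> v" "VS \<longlonglongrightarrow> vs" "U \<longlonglongrightarrow> u" "TH \<longlonglongrightarrow> \<theta>" "W \<longlonglongrightarrow> w"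
  shows "(\<lambda>k. Delta_dir phi (V k) (VS k) (U k) (TH k) (W k)) \<longlonglongrightarrow> Delta_dir phi v vs u \<theta> w"
proof -
  have phi_lim: "(\<lambda>k. phi (g k)) \<longlonglongrightarrow> phi l" if "g \<longlonglongrightarrow> l" for g l
    using continuous_on_tendsto_compose[OF phi that] by simp
  show ?thesis unfolding Delta_dir_def Let_def
    by (intro tendsto_intros phi_lim lim) simp_all
qed

lemma Delta_dir_bound:
  fixes phi :: "'a::euclidean_space \<Rightarrow> real"
  assumes M: "\<forall>z\<in>cball 0 \<rho>. \<bar>phi z\<bar> \<le> M" and rho: "2 * (norm v + norm vs) \<le> \<rho>"
    and u: "norm u \<le> 1" and w: "norm w \<le> 1"
  shows "\<bar>Delta_dir phi v vs u \<theta> w\<bar> \<le> 4 * M"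
proof -
  define \<sigma> where "\<sigma> = cos \<theta> *\<^sub>R u + sin \<theta> *\<^sub>R w"
  have "norm \<sigma> \<le> 2"
    using mult_le_one[OF abs_cos_le_one[of \<theta>] norm_ge_zero u]
      mult_le_one[OF abs_sin_le_one[of \<theta>] norm_ge_zero w]
    unfolding \<sigma>_def by (intro order_trans[OF norm_triangle_ineq]) simp
  then have "norm ((norm (v - vs) / 2) *\<^sub>R \<sigma>) \<le> norm v + norm vs"
    using norm_triangle_ineq4[of v vs] by (simp add: mult_left_le_one_le order_trans[OF mult_left_mono])
  moreover have "norm ((1/2) *\<^sub>R (v + vs)) \<le> norm v + norm vs"
    using norm_triangle_ineq[of v vs] by simp (use norm_ge_zero[of v] norm_ge_zero[of vs] in linarith)
  ultimately have "(1/2) *\<^sub>R (v + vs) + (norm (v - vs) / 2) *\<^sub>R \<sigma> \<in> cball 0 \<rho>"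
    "(1/2) *\<^sub>R (v + vs) - (norm (v - vs) / 2) *\<^sub>R \<sigma> \<in> cball 0 \<rho>"
    using rho norm_triangle_ineq[of "(1/2) *\<^sub>R (v + vs)" "(norm (v - vs) / 2) *\<^sub>R \<sigma>"]
      norm_triangle_ineq4[of "(1/2) *\<^sub>R (v + vs)" "(norm (v - vs) / 2) *\<^sub>R \<sigma>"] by auto
  moreover have "norm v \<le> \<rho>" and "norm vs \<le> \<rho>"
    using rho norm_ge_zero[of v] norm_ge_zero[of vs] by argo+
  ultimately have "\<bar>phi ((1/2) *\<^sub>R (v + vs) + (norm (v - vs) / 2) *\<^sub>R \<sigma>)\<bar> \<le> M"
    "\<bar>phi ((1/2) *\<^sub>R (v + vs) - (norm (v - vs) / 2) *\<^sub>R \<sigma>)\<bar> \<le> M"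
    "\<bar>phi v\<bar> \<le> M" "\<bar>phi vs\<bar> \<le> M"
    using M by auto
  then show ?thesis unfolding Delta_dir_def Let_def \<sigma>_def[symmetric] by linarith
qed

lemma Delta_phi_bounded:
  fixes phi :: "'a::euclidean_space \<Rightarrow> real"
  assumes "continuous_on UNIV phi"
  obtains M where "\<And>w. norm w = 1 \<Longrightarrow> \<bar>Delta_phi phi v vs \<theta> w\<bar> \<le> M"
proof -
  obtain M where "\<forall>z\<in>cball 0 (2 * (norm v + norm vs)). \<bar>phi z\<bar> \<le> M"
    using bounded_on_cball[OF assms] by blast
  from Delta_dir_bound[OF this order_refl] that[of "4 * M"] show ?thesis
    by (simp add: Delta_phi_eq_Delta_dir norm_coll_dir)
qed

text \<open>The inner integral of \<open>L\<^sub>B\<close>: by the symmetry of the sphere measure it equals the integral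
  of the symmetrised difference, hence is \<open>O(|v - v\<^sub>*|\<^sup>2 sin\<^sup>2\<theta>)\<close>.\<close>
lemma sphere_average_bound:
  fixes phi :: "'a::euclidean_space \<Rightarrow> real"
  assumes dphi: "\<forall>x. (phi has_derivative blinfun_apply (D x)) (at x)"
    and dD: "\<forall>x. (D has_derivative blinfun_apply (D2 x)) (at x)"
    and K: "\<forall>z\<in>cball 0 (2 * (norm v + norm vs)). norm (D2 z) \<le> K"
  shows "\<bar>\<integral>\<omega>. Delta_phi phi v vs \<theta> \<omega> \<partial>perp_sphere_measure (coll_dir v vs)\<bar>
           \<le> sphere_mass_bound TYPE('a) * (5 * K * norm (v - vs) ^ 2 * sin \<theta> ^ 2)"
proof -
  define f where "f = Delta_phi phi v vs \<theta>"
  define u where "u = coll_dir v vs"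
  have phi: "continuous_on UNIV phi" by (rule C2_with_continuous[OF dphi])
  have [measurable]: "f \<in> borel_measurable borel"
    unfolding f_def Delta_phi_eq_Delta_dir using phi by (rule Delta_dir_measurable)
  obtain M where M: "\<And>w. norm w = 1 \<Longrightarrow> \<bar>f w\<bar> \<le> M"
    unfolding f_def using Delta_phi_bounded[OF phi] by blast
  have u: "norm u = 1" by (simp add: u_def norm_coll_dir)
  have "integrable (perp_sphere_measure u) f"
    by (rule integrable_perp_sphere[OF _ u M]) simp_all
  moreover have "integrable (perp_sphere_measure u) (\<lambda>w. f (- w))"
    by (rule integrable_perp_sphere[OF _ u, of _ M]) (simp_all add: M)
  ultimately have "integral\<^sup>L (perp_sphere_measure u) f
      = integral\<^sup>L (perp_sphere_measure u) (\<lambda>w. (f w + f (- w)) / 2)"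
    using integral_perp_sphere_uminus[of f u] by simp
  also have "\<bar>\<dots>\<bar> \<le> sphere_mass_bound TYPE('a) * (5 * K * norm (v - vs) ^ 2 * sin \<theta> ^ 2)"
  proof (rule abs_integral_perp_sphere_le[OF _ u])
    have "0 \<le> K" by (rule cball_bound_nonneg[OF K]) simp
    then show "\<bar>(f w + f (- w)) / 2\<bar> \<le> 5 * K * norm (v - vs) ^ 2 * sin \<theta> ^ 2" if "norm w = 1" for w
      using Delta_phi_symmetric_bound[OF dphi dD K, of w \<theta>] that by (simp add: f_def)
  qed simp
  finally show ?thesis by (simp add: f_def u_def)
qed

text \<open>Almost every \<open>\<theta>\<close> lies outside \<open>[0, \<pi>]\<close> or in its interior, where \<open>cos \<theta> \<in> (-1, 1)\<close>;
  the endpoints, where the kernel hypotheses say nothing, are a null set.\<close>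
lemma AE_interior_angle:
  assumes "\<And>\<theta>. \<theta> \<notin> {0..pi} \<Longrightarrow> P \<theta>" and "\<And>\<theta>. 0 < \<theta> \<Longrightarrow> \<theta> < pi \<Longrightarrow> P \<theta>"
  shows "AE \<theta> in lborel. P \<theta>"
proof -
  have "AE \<theta> in lborel. \<theta> \<noteq> 0" "AE \<theta> in lborel. \<theta> \<noteq> pi" by (rule AE_lborel_singleton)+
  then show ?thesis
  proof eventually_elim
    fix \<theta> :: real assume "\<theta> \<noteq> 0" "\<theta> \<noteq> pi"
    then show "P \<theta>" using assms by (cases "\<theta> \<in> {0..pi}") auto
  qed
qed

lemma cos_in_open_interval:
  assumes "0 < \<theta>" "\<theta> < pi"
  shows "cos \<theta> \<in> {-1<..<1}"
proof -
  have "0 < (sin \<theta>)\<^sup>2" using sin_gt_zero[OF assms] by simp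
  then have "(cos \<theta>)\<^sup>2 < 1" using sin_cos_squared_add[of \<theta>] by linarith
  then show ?thesis by (simp add: abs_square_less_1 abs_less_iff)
qed

lemma kernel_cos_measurable:
  assumes "kernel_basic Bk" and "0 \<le> r"
  shows "(\<lambda>\<theta>. Bk r (cos \<theta>)) \<in> borel_measurable borel"
proof -
  have c: "(\<lambda>\<theta>::real. (r, cos \<theta>)) \<in> measurable borel (restrict_space borel ({0..} \<times> {-1..1}))"
    using assms(2) by (intro measurable_restrict_space2) auto
  have m: "(\<lambda>p. Bk (fst p) (snd p)) \<in> borel_measurable (restrict_space borel ({0..} \<times> {-1..1}))"
    using assms(1) by (simp add: kernel_basic_def)
  show ?thesis using measurable_comp[OF c m] by (simp add: comp_def)
qed

lemma b_cos_measurable: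
  fixes b :: "real \<Rightarrow> real"
  assumes "b \<in> borel_measurable (restrict_space borel {-1..1})"
  shows "(\<lambda>\<theta>. b (cos \<theta>)) \<in> borel_measurable borel"
proof -
  have "(\<lambda>\<theta>::real. cos \<theta>) \<in> measurable borel (restrict_space borel {-1..1})"
    by (intro measurable_restrict_space2) auto
  from measurable_comp[OF this assms] show ?thesis by (simp add: comp_def)
qed

text \<open>The angular weight \<open>b(cos \<theta>) sin\<^sup>n\<theta>\<close> on \<open>[0, \<pi>]\<close>; for \<open>n = N\<close> its integrability is (H0).\<close>
definition angular_weight :: "(real \<Rightarrow> real) \<Rightarrow> nat \<Rightarrow> real \<Rightarrow> real" where
  "angular_weight b n \<theta> = indicator {0..pi} \<theta> * (b (cos \<theta>) * sin \<theta> ^ n)"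

lemma angular_weight_nonneg: "\<forall>t\<in>{-1..1}. 0 \<le> b t \<Longrightarrow> 0 \<le> angular_weight b n \<theta>"
  by (auto simp: angular_weight_def indicator_def intro!: mult_nonneg_nonneg zero_le_power sin_ge_zero)

lemma integrable_angular_weight:
  assumes b_meas: "b \<in> borel_measurable (restrict_space borel {-1..1})"
    and b_nonneg: "\<forall>t\<in>{-1..1}. 0 \<le> b t"
    and H0: "(\<integral>\<^sup>+\<theta>\<in>{0..pi}. ennreal (b (cos \<theta>) * sin \<theta> ^ n) \<partial>lborel) < \<infinity>"
  shows "integrable lborel (angular_weight b n)"
proof (rule integrableI_bounded)
  note b_cos_measurable[OF b_meas, measurable]
  show "angular_weight b n \<in> borel_measurable lborel"
    unfolding angular_weight_def by measurable
  have "(\<integral>\<^sup>+\<theta>. ennreal (norm (angular_weight b n \<theta>)) \<partial>lborel)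
      = (\<integral>\<^sup>+\<theta>\<in>{0..pi}. ennreal (b (cos \<theta>) * sin \<theta> ^ n) \<partial>lborel)"
    using angular_weight_nonneg[OF b_nonneg]
    by (intro nn_integral_cong) (auto simp: angular_weight_def indicator_def)
  with H0 show "(\<integral>\<^sup>+\<theta>. ennreal (norm (angular_weight b n \<theta>)) \<partial>lborel) < \<infinity>" by simp
qed

definition kernel_dominated :: "(real \<Rightarrow> real \<Rightarrow> real) \<Rightarrow> (real \<Rightarrow> real) \<Rightarrow> real \<Rightarrow> bool" where
  "kernel_dominated Bk b \<gamma> \<longleftrightarrow> (\<forall>r\<ge>0. \<forall>t\<in>{-1<..<1}. Bk r t \<le> (1 + r\<^sup>2) powr (\<gamma>/2) * b t)"

definition L_integrand :: "(real \<Rightarrow> real \<Rightarrow> real) \<Rightarrow> ('a::euclidean_space \<Rightarrow> real) \<Rightarrow> 'a \<Rightarrow> 'a \<Rightarrow> real \<Rightarrow> real" where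
  "L_integrand Bk phi v vs \<theta> = indicator {0..pi} \<theta> * (Bk (norm (v - vs)) (cos \<theta>) * sin \<theta> ^ (DIM('a) - 2)
      * (\<integral>\<omega>. Delta_phi phi v vs \<theta> \<omega> \<partial>perp_sphere_measure (coll_dir v vs)))"

lemma L_op_eq_integral: "L_op Bk phi v vs = (\<integral>\<theta>. L_integrand Bk phi v vs \<theta> \<partial>lborel)"
  unfolding L_op_def set_lebesgue_integral_def L_integrand_def by simp

lemma sphere_average_continuous:
  fixes phi :: "'a::euclidean_space \<Rightarrow> real"
  assumes dim: "DIM('a) \<ge> 2" and phi: "continuous_on UNIV phi"
  shows "continuous_on UNIV (\<lambda>\<theta>. \<integral>\<omega>. Delta_phi phi v vs \<theta> \<omega> \<partial>perp_sphere_measure (coll_dir v vs))"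
proof (rule continuous_on_sequentiallyI)
  fix TH :: "nat \<Rightarrow> real" and \<theta> assume TH: "TH \<longlonglongrightarrow> \<theta>"
  obtain M where M: "\<forall>z\<in>cball 0 (2 * (norm v + norm vs)). \<bar>phi z\<bar> \<le> M"
    using bounded_on_cball[OF phi] by blast
  show "(\<lambda>k. \<integral>\<omega>. Delta_phi phi v vs (TH k) \<omega> \<partial>perp_sphere_measure (coll_dir v vs))
          \<longlonglongrightarrow> (\<integral>\<omega>. Delta_phi phi v vs \<theta> \<omega> \<partial>perp_sphere_measure (coll_dir v vs))"
    unfolding Delta_phi_eq_Delta_dir
    using phi Delta_dir_bound[OF M order_refl] norm_coll_dir[of v vs]
    by (intro integral_perp_sphere_tendsto[OF dim tendsto_const, of _ _ _ "4 * M"]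
        Delta_dir_tendsto[OF phi tendsto_const tendsto_const tendsto_const TH tendsto_const]) auto
qed

lemma L_integrand_measurable:
  fixes phi :: "'a::euclidean_space \<Rightarrow> real"
  assumes "DIM('a) \<ge> 2" and "continuous_on UNIV phi" and "kernel_basic Bk"
  shows "L_integrand Bk phi v vs \<in> borel_measurable borel"
  using borel_measurable_continuous_onI[OF sphere_average_continuous[OF assms(1,2)]]
    kernel_cos_measurable[OF assms(3) norm_ge_zero]
  unfolding L_integrand_def by measurable

lemma power_diff_two: "2 \<le> n \<Longrightarrow> x ^ (n - 2) * x ^ 2 = (x::'a::monoid_mult) ^ n"
  by (metis le_add_diff_inverse2 power_add)

text \<open>Domination of the \<open>\<theta>\<close>-integrand: the factor \<open>sin\<^sup>2\<theta>\<close> gained from the cancellation in the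
  inner integral turns \<open>sin\<^sup>N\<^sup>-\<^sup>2\<theta>\<close> into the weight \<open>sin\<^sup>N\<theta>\<close> of (H0).\<close>
lemma L_integrand_bound:
  fixes phi :: "'a::euclidean_space \<Rightarrow> real"
  assumes dim: "DIM('a) \<ge> 2" and kB: "kernel_basic Bk" and dom: "kernel_dominated Bk b \<gamma>"
    and gamma: "0 \<le> \<gamma>" and b_nonneg: "\<forall>t\<in>{-1..1}. 0 \<le> b t"
    and dphi: "\<forall>x. (phi has_derivative blinfun_apply (D x)) (at x)"
    and dD: "\<forall>x. (D has_derivative blinfun_apply (D2 x)) (at x)"
    and K: "\<forall>z\<in>cball 0 (2 * (norm v + norm vs)). norm (D2 z) \<le> K"
    and rho: "norm (v - vs) \<le> \<rho>"
  shows "AE \<theta> in lborel. \<bar>L_integrand Bk phi v vs \<theta>\<bar> \<le> angular_weight b DIM('a) \<theta>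
           * ((1 + \<rho>\<^sup>2) powr (\<gamma>/2) * sphere_mass_bound TYPE('a) * 5 * K * norm (v - vs) ^ 2)"
proof (rule AE_interior_angle)
  fix \<theta> :: real assume "0 < \<theta>" "\<theta> < pi"
  then have \<theta>: "\<theta> \<in> {0..pi}" and c: "cos \<theta> \<in> {-1<..<1}" and s: "0 \<le> sin \<theta>"
    using cos_in_open_interval sin_ge_zero by auto
  define r where "r = norm (v - vs)"
  define J where "J = (\<integral>\<omega>. Delta_phi phi v vs \<theta> \<omega> \<partial>perp_sphere_measure (coll_dir v vs))"
  define P where "P = (1 + \<rho>\<^sup>2) powr (\<gamma>/2)"
  have B0: "0 \<le> Bk r (cos \<theta>)" using kB c by (simp add: kernel_basic_def r_def)
  have "Bk r (cos \<theta>) \<le> (1 + r\<^sup>2) powr (\<gamma>/2) * b (cos \<theta>)"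
    using dom c by (simp add: kernel_dominated_def r_def)
  also have "\<dots> \<le> P * b (cos \<theta>)"
    unfolding P_def r_def using gamma rho b_nonneg c
    by (intro mult_right_mono powr_mono2 add_left_mono power_mono) auto
  finally have B: "Bk r (cos \<theta>) \<le> P * b (cos \<theta>)" .
  have J: "\<bar>J\<bar> \<le> sphere_mass_bound TYPE('a) * (5 * K * r ^ 2 * sin \<theta> ^ 2)"
    unfolding J_def r_def by (rule sphere_average_bound[OF dphi dD K])
  have "\<bar>L_integrand Bk phi v vs \<theta>\<bar> = Bk r (cos \<theta>) * sin \<theta> ^ (DIM('a) - 2) * \<bar>J\<bar>"
    using \<theta> B0 s by (simp add: L_integrand_def r_def J_def abs_mult)
  also have "\<dots> \<le> (P * b (cos \<theta>)) * sin \<theta> ^ (DIM('a) - 2)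
                   * (sphere_mass_bound TYPE('a) * (5 * K * r ^ 2 * sin \<theta> ^ 2))"
    using B J B0 s by (intro mult_mono) auto
  also have "\<dots> = (b (cos \<theta>) * (sin \<theta> ^ (DIM('a) - 2) * sin \<theta> ^ 2))
                   * (P * sphere_mass_bound TYPE('a) * 5 * K * r ^ 2)"
    by (simp add: algebra_simps)
  also have "sin \<theta> ^ (DIM('a) - 2) * sin \<theta> ^ 2 = sin \<theta> ^ DIM('a)"
    by (rule power_diff_two[OF dim])
  also have "b (cos \<theta>) * sin \<theta> ^ DIM('a) = angular_weight b DIM('a) \<theta>"
    using \<theta> by (simp add: angular_weight_def)
  finally show "\<bar>L_integrand Bk phi v vs \<theta>\<bar> \<le> angular_weight b DIM('a) \<theta>
           * ((1 + \<rho>\<^sup>2) powr (\<gamma>/2) * sphere_mass_bound TYPE('a) * 5 * K * norm (v - vs) ^ 2)"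
    by (simp add: P_def r_def)
qed (simp add: L_integrand_def angular_weight_def)

lemma C2_withD:
  assumes "C2_with phi D D2"
  shows "\<forall>x. (phi has_derivative blinfun_apply (D x)) (at x)"
    and "\<forall>x. (D has_derivative blinfun_apply (D2 x)) (at x)"
    and "continuous_on UNIV phi"
  using assms C2_with_continuous by (auto simp: C2_with_def)

lemma C2_with_second_derivative_bounded:
  assumes "C2_with phi D D2"
  obtains K where "\<forall>z\<in>cball 0 \<rho>. norm (D2 z) \<le> K"
proof -
  have "continuous_on UNIV (\<lambda>z. norm (D2 z))"
    using assms by (intro continuous_on_norm) (simp add: C2_with_def)
  from bounded_on_cball[OF this] that show ?thesis by auto
qed

lemma L_op_bound:
  fixes phi :: "'a::euclidean_space \<Rightarrow> real"
  assumes dim: "DIM('a) \<ge> 2" and kB: "kernel_basic Bk" and dom: "kernel_dominated Bk b \<gamma>"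
    and gamma: "0 \<le> \<gamma>" and b_nonneg: "\<forall>t\<in>{-1..1}. 0 \<le> b t"
    and W: "integrable lborel (angular_weight b DIM('a))"
    and C2: "C2_with phi D D2"
    and K: "\<forall>z\<in>cball 0 (2 * (norm v + norm vs)). norm (D2 z) \<le> K"
    and rho: "norm (v - vs) \<le> \<rho>"
  shows "integrable lborel (L_integrand Bk phi v vs)"
    and "\<bar>L_op Bk phi v vs\<bar> \<le> (\<integral>\<theta>. angular_weight b DIM('a) \<theta> \<partial>lborel)
           * ((1 + \<rho>\<^sup>2) powr (\<gamma>/2) * sphere_mass_bound TYPE('a) * 5 * K * norm (v - vs) ^ 2)"
proof -
  note C2 = C2_withD[OF C2]
  let ?c = "(1 + \<rho>\<^sup>2) powr (\<gamma>/2) * sphere_mass_bound TYPE('a) * 5 * K * norm (v - vs) ^ 2"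
  have bound: "AE \<theta> in lborel. \<bar>L_integrand Bk phi v vs \<theta>\<bar> \<le> angular_weight b DIM('a) \<theta> * ?c"
    by (rule L_integrand_bound[OF dim kB dom gamma b_nonneg C2(1,2) K rho])
  have Wc: "integrable lborel (\<lambda>\<theta>. angular_weight b DIM('a) \<theta> * ?c)"
    by (rule integrable_mult_left[OF W])
  show int: "integrable lborel (L_integrand Bk phi v vs)"
    using L_integrand_measurable[OF dim C2(3) kB] bound
    by (intro Bochner_Integration.integrable_bound[OF Wc]) auto
  have "\<bar>L_op Bk phi v vs\<bar> \<le> (\<integral>\<theta>. \<bar>L_integrand Bk phi v vs \<theta>\<bar> \<partial>lborel)"
    unfolding L_op_eq_integral by (rule integral_abs_bound)
  also have "\<dots> \<le> (\<integral>\<theta>. angular_weight b DIM('a) \<theta> * ?c \<partial>lborel)"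
  proof (rule integral_mono_AE'[OF Wc bound])
    show "AE \<theta> in lborel. 0 \<le> angular_weight b DIM('a) \<theta> * ?c"
      using bound by eventually_elim (rule order_trans[OF abs_ge_zero])
  qed
  finally show "\<bar>L_op Bk phi v vs\<bar> \<le> (\<integral>\<theta>. angular_weight b DIM('a) \<theta> \<partial>lborel) * ?c" by simp
qed

lemma L_op_tendsto:
  fixes phik :: "nat \<Rightarrow> 'a::euclidean_space \<Rightarrow> real" and phi :: "'a \<Rightarrow> real"
  assumes dim: "DIM('a) \<ge> 2" and gamma: "0 \<le> \<gamma>" and b_nonneg: "\<forall>t\<in>{-1..1}. 0 \<le> b t"
    and W: "integrable lborel (angular_weight b DIM('a))"
    and kB: "kernel_basic B" and kBk: "\<And>k. kernel_basic (Bk k)"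
    and dom: "\<And>k. kernel_dominated (Bk k) b \<gamma>"
    and phi: "continuous_on UNIV phi" and C2: "\<And>k. C2_with (phik k) (Dk k) (D2k k)"
    and K: "\<And>k. \<forall>z\<in>cball 0 (2 * (norm (V k) + norm (VS k))). norm (D2k k z) \<le> K"
    and rho: "\<And>k. norm (V k - VS k) \<le> \<rho>"
    and lim: "\<And>\<theta>. 0 < \<theta> \<Longrightarrow> \<theta> < pi \<Longrightarrow>
               (\<lambda>k. L_integrand (Bk k) (phik k) (V k) (VS k) \<theta>) \<longlonglongrightarrow> L_integrand B phi v vs \<theta>"
  shows "(\<lambda>k. L_op (Bk k) (phik k) (V k) (VS k)) \<longlonglongrightarrow> L_op B phi v vs"
  unfolding L_op_eq_integral
proof (rule integral_dominated_convergence)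
  let ?c = "(1 + \<rho>\<^sup>2) powr (\<gamma>/2) * sphere_mass_bound TYPE('a) * 5 * K * \<rho> ^ 2"
  show "integrable lborel (\<lambda>\<theta>. angular_weight b DIM('a) \<theta> * ?c)" by (rule integrable_mult_left[OF W])
  show "L_integrand B phi v vs \<in> borel_measurable lborel"
    "L_integrand (Bk k) (phik k) (V k) (VS k) \<in> borel_measurable lborel" for k
    using L_integrand_measurable[OF dim phi kB] L_integrand_measurable[OF dim C2_withD(3)[OF C2] kBk]
    by simp_all
  show "AE \<theta> in lborel. norm (L_integrand (Bk k) (phik k) (V k) (VS k) \<theta>)
                          \<le> angular_weight b DIM('a) \<theta> * ?c" for k
    using L_integrand_bound[OF dim kBk dom gamma b_nonneg C2_withD(1,2)[OF C2] K rho]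
  proof eventually_elim
    fix \<theta> assume "\<bar>L_integrand (Bk k) (phik k) (V k) (VS k) \<theta>\<bar> \<le> angular_weight b DIM('a) \<theta>
        * ((1 + \<rho>\<^sup>2) powr (\<gamma>/2) * sphere_mass_bound TYPE('a) * 5 * K * norm (V k - VS k) ^ 2)"
    moreover have "0 \<le> K" by (rule cball_bound_nonneg[OF K[of k]]) simp
    then have "angular_weight b DIM('a) \<theta> * ((1 + \<rho>\<^sup>2) powr (\<gamma>/2) * sphere_mass_bound TYPE('a) * 5
                 * K * norm (V k - VS k) ^ 2) \<le> angular_weight b DIM('a) \<theta> * ?c"
      using angular_weight_nonneg[OF b_nonneg] sphere_mass_bound_nonneg rho[of k]
      by (intro mult_left_mono mult_mono power_mono) auto
    ultimately show "norm (L_integrand (Bk k) (phik k) (V k) (VS k) \<theta>) \<le> angular_weight b DIM('a) \<theta> * ?c"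
      unfolding real_norm_def by (rule order_trans)
  qed
  show "AE \<theta> in lborel. (\<lambda>k. L_integrand (Bk k) (phik k) (V k) (VS k) \<theta>) \<longlonglongrightarrow> L_integrand B phi v vs \<theta>"
  proof (rule AE_interior_angle)
    fix \<theta> :: real assume "\<theta> \<notin> {0..pi}"
    then show "(\<lambda>k. L_integrand (Bk k) (phik k) (V k) (VS k) \<theta>) \<longlonglongrightarrow> L_integrand B phi v vs \<theta>"
      by (simp add: L_integrand_def)
  qed (rule lim)
qed

lemma coll_dir_tendsto:
  assumes V: "V \<longlonglongrightarrow> v" and VS: "VS \<longlonglongrightarrow> vs" and ne: "v \<noteq> vs"
  shows "(\<lambda>k. coll_dir (V k) (VS k)) \<longlonglongrightarrow> coll_dir v vs"
proof -
  have d: "(\<lambda>k. V k - VS k) \<longlonglongrightarrow> v - vs" by (intro tendsto_intros V VS)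
  have "(\<lambda>k. (V k - VS k) /\<^sub>R norm (V k - VS k)) \<longlonglongrightarrow> coll_dir v vs"
    using ne unfolding divide_inverse_commute[symmetric] scaleR_conv_of_real
    by (simp add: coll_dir_def) (intro tendsto_intros d, simp)
  moreover have "eventually (\<lambda>k. V k \<noteq> VS k) sequentially"
    using tendsto_imp_eventually_ne[OF d, of 0] ne by simp
  then have "eventually (\<lambda>k. (V k - VS k) /\<^sub>R norm (V k - VS k) = coll_dir (V k) (VS k)) sequentially"
    by eventually_elim (simp add: coll_dir_def)
  ultimately show ?thesis by (rule Lim_transform_eventually)
qed

lemma L_integrand_tendsto_off_diagonal:
  fixes phi :: "'a::euclidean_space \<Rightarrow> real"
  assumes dim: "DIM('a) \<ge> 2" and kB: "kernel_basic Bk" and phi: "continuous_on UNIV phi"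
    and M: "\<forall>z\<in>cball 0 \<rho>. \<bar>phi z\<bar> \<le> M" and RV: "\<And>k. 2 * (norm (V k) + norm (VS k)) \<le> \<rho>"
    and V: "V \<longlonglongrightarrow> v" and VS: "VS \<longlonglongrightarrow> vs" and ne: "v \<noteq> vs"
    and \<theta>: "0 < \<theta>" "\<theta> < pi"
  shows "(\<lambda>k. L_integrand Bk phi (V k) (VS k) \<theta>) \<longlonglongrightarrow> L_integrand Bk phi v vs \<theta>"
proof -
  have U: "(\<lambda>k. coll_dir (V k) (VS k)) \<longlonglongrightarrow> coll_dir v vs" by (rule coll_dir_tendsto[OF V VS ne])
  have "continuous_on {0..} (\<lambda>r. Bk r (cos \<theta>))"
    using kB cos_in_open_interval[OF \<theta>] by (simp add: kernel_basic_def)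
  then have "(\<lambda>k. Bk (norm (V k - VS k)) (cos \<theta>)) \<longlonglongrightarrow> Bk (norm (v - vs)) (cos \<theta>)"
    using continuous_on_tendsto_compose tendsto_norm[OF tendsto_diff[OF V VS]] by force
  moreover have "(\<lambda>k. \<integral>\<omega>. Delta_phi phi (V k) (VS k) \<theta> \<omega> \<partial>perp_sphere_measure (coll_dir (V k) (VS k)))
      \<longlonglongrightarrow> (\<integral>\<omega>. Delta_phi phi v vs \<theta> \<omega> \<partial>perp_sphere_measure (coll_dir v vs))"
    unfolding Delta_phi_eq_Delta_dir
  proof (rule integral_perp_sphere_tendsto[OF dim U norm_coll_dir norm_coll_dir])
    show "\<bar>Delta_dir phi (V k) (VS k) (coll_dir (V k) (VS k)) \<theta> w\<bar> \<le> 4 * M" if "norm w = 1" for k w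
      using RV[of k] that by (intro Delta_dir_bound[OF M]) (auto simp: norm_coll_dir)
    show "(\<lambda>k. Delta_dir phi (V k) (VS k) (coll_dir (V k) (VS k)) \<theta>
                (sphere_proj (coll_dir (V k) (VS k)) x))
            \<longlonglongrightarrow> Delta_dir phi v vs (coll_dir v vs) \<theta> (sphere_proj (coll_dir v vs) x)"
      if "proj_perp (coll_dir v vs) x \<noteq> 0" for x
      by (rule Delta_dir_tendsto[OF phi V VS U tendsto_const sphere_proj_tendsto[OF U that]])
  qed (use phi in simp_all)
  ultimately show ?thesis unfolding L_integrand_def by (intro tendsto_intros)
qed

text \<open>Part (I): \<open>L\<^sub>B[\<Delta>\<phi>]\<close> is sequentially continuous in \<open>(v, v\<^sub>*)\<close>. On the diagonal use the
  quadratic decay, off the diagonal dominated convergence.\<close>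
lemma L_op_tendsto_velocities:
  fixes phi :: "'a::euclidean_space \<Rightarrow> real"
  assumes dim: "DIM('a) \<ge> 2" and gamma: "0 \<le> \<gamma>" and b_nonneg: "\<forall>t\<in>{-1..1}. 0 \<le> b t"
    and W: "integrable lborel (angular_weight b DIM('a))"
    and kB: "kernel_basic Bk" and dom: "kernel_dominated Bk b \<gamma>" and C2: "C2_with phi D D2"
    and V: "V \<longlonglongrightarrow> v" and VS: "VS \<longlonglongrightarrow> vs"
  shows "(\<lambda>k. L_op Bk phi (V k) (VS k)) \<longlonglongrightarrow> L_op Bk phi v vs"
proof -
  obtain BV BVS where BV: "\<And>k. norm (V k) \<le> BV" and BVS: "\<And>k. norm (VS k) \<le> BVS"
    using convergent_imp_Bseq[OF convergentI[OF V]] convergent_imp_Bseq[OF convergentI[OF VS]]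
    by (auto simp: Bseq_def)
  define R where "R = BV + BVS"
  have RV: "norm (V k) + norm (VS k) \<le> R" for k using BV[of k] BVS[of k] by (simp add: R_def)
  then have dist_le: "norm (V k - VS k) \<le> R" for k
    using norm_triangle_ineq4[of "V k" "VS k"] by (meson order_trans)
  obtain K where K': "\<forall>z\<in>cball 0 (2 * R). norm (D2 z) \<le> K"
    using C2_with_second_derivative_bounded[OF C2] by blast
  have K: "\<forall>z\<in>cball 0 (2 * (norm (V k) + norm (VS k))). norm (D2 z) \<le> K" for k
    using K' RV[of k] by auto
  note phi = C2_withD[OF C2]
  show ?thesis
  proof (cases "v = vs")
    case True
    define c where "c = (\<integral>\<theta>. angular_weight b DIM('a) \<theta> \<partial>lborel)
        * ((1 + R\<^sup>2) powr (\<gamma>/2) * sphere_mass_bound TYPE('a) * 5 * K)"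
    have "(\<lambda>k. L_op Bk phi (V k) (VS k)) \<longlonglongrightarrow> 0"
    proof (rule Lim_null_comparison)
      show "\<forall>\<^sub>F k in sequentially. norm (L_op Bk phi (V k) (VS k)) \<le> c * norm (V k - VS k) ^ 2"
        using L_op_bound(2)[OF dim kB dom gamma b_nonneg W C2 K dist_le]
        by (simp add: c_def mult.assoc)
      have "(\<lambda>k. c * norm (V k - VS k) ^ 2) \<longlonglongrightarrow> c * norm (v - vs) ^ 2"
        by (intro tendsto_intros V VS)
      then show "(\<lambda>k. c * norm (V k - VS k) ^ 2) \<longlonglongrightarrow> 0" using True by simp
    qed
    moreover have "L_op Bk phi v vs = 0"
      using True by (simp add: L_op_def Delta_phi_eq_Delta_dir Delta_dir_diagonal)
    ultimately show ?thesis by simp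
  next
    case False
    obtain M where M: "\<forall>z\<in>cball 0 (2 * R). \<bar>phi z\<bar> \<le> M" using bounded_on_cball[OF phi(3)] by blast
    have "2 * (norm (V k) + norm (VS k)) \<le> 2 * R" for k using RV[of k] by simp
    from L_integrand_tendsto_off_diagonal[OF dim kB phi(3) M this V VS False]
    show ?thesis by (rule L_op_tendsto[OF dim gamma b_nonneg W kB kB dom phi(3) C2 K dist_le])
  qed
qed

lemma L_op_continuous:
  fixes phi :: "'a::euclidean_space \<Rightarrow> real"
  assumes "DIM('a) \<ge> 2" "0 \<le> \<gamma>" "\<forall>t\<in>{-1..1}. 0 \<le> b t" "integrable lborel (angular_weight b DIM('a))"
    "kernel_basic Bk" "kernel_dominated Bk b \<gamma>" "C2_with phi D D2"
  shows "continuous_on UNIV (\<lambda>p. L_op Bk phi (fst p) (snd p))"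
proof (rule continuous_on_sequentiallyI)
  fix P :: "nat \<Rightarrow> 'a \<times> 'a" and p assume "P \<longlonglongrightarrow> p"
  then show "(\<lambda>k. L_op Bk phi (fst (P k)) (snd (P k))) \<longlonglongrightarrow> L_op Bk phi (fst p) (snd p)"
    by (intro L_op_tendsto_velocities[OF assms] tendsto_fst tendsto_snd)
qed

lemma deriv_sum2_bounds:
  fixes phi :: "'a::euclidean_space \<Rightarrow> real"
  shows "\<bar>phi v\<bar> \<le> deriv_sum2 phi D D2 v" and "norm (D2 v) \<le> deriv_sum2 phi D D2 v"
proof -
  have s1: "0 \<le> (\<Sum>i\<in>Basis. \<bar>D v i\<bar>)" and s2: "0 \<le> (\<Sum>i\<in>Basis. \<Sum>j\<in>Basis. \<bar>D2 v i j\<bar>)"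
    by (simp_all add: sum_nonneg)
  then show "\<bar>phi v\<bar> \<le> deriv_sum2 phi D D2 v" unfolding deriv_sum2_def by linarith
  have "norm (D2 v) \<le> (\<Sum>i\<in>Basis. norm (D2 v i))" by (rule norm_blinfun_euclidean_le)
  also have "\<dots> \<le> (\<Sum>i\<in>Basis. \<Sum>j\<in>Basis. \<bar>D2 v i j\<bar>)"
  proof (rule sum_mono)
    show "norm (D2 v i) \<le> (\<Sum>j\<in>Basis. \<bar>D2 v i j\<bar>)" for i
      using norm_blinfun_euclidean_le[of "blinfun_apply (D2 v) i"] by simp
  qed
  finally show "norm (D2 v) \<le> deriv_sum2 phi D D2 v"
    unfolding deriv_sum2_def using s1 abs_ge_zero[of "phi v"] by linarith
qed

lemma increasing_kernel_le:
  fixes Bn :: "nat \<Rightarrow> real \<Rightarrow> real \<Rightarrow> real"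
  assumes "\<forall>r\<ge>0. \<forall>t\<in>{-1<..<1}. incseq (\<lambda>k. Bn k r t) \<and> (\<lambda>k. Bn k r t) \<longlonglongrightarrow> Bb r t"
    and "0 \<le> r" and "t \<in> {-1<..<1}"
  shows "Bn k r t \<le> Bb r t"
proof -
  have "incseq (\<lambda>k. Bn k r t)" "(\<lambda>k. Bn k r t) \<longlonglongrightarrow> Bb r t" using assms by auto
  then show ?thesis by (rule incseq_le)
qed

lemma increasing_kernels_dominated:
  fixes Bn :: "nat \<Rightarrow> real \<Rightarrow> real \<Rightarrow> real"
  assumes "kernel_dominated Bb b \<gamma>"
    and "\<forall>r\<ge>0. \<forall>t\<in>{-1<..<1}. incseq (\<lambda>k. Bn k r t) \<and> (\<lambda>k. Bn k r t) \<longlonglongrightarrow> Bb r t"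
  shows "kernel_dominated (Bn k) b \<gamma>"
  unfolding kernel_dominated_def
proof (intro allI impI ballI)
  fix r t :: real assume "0 \<le> r" "t \<in> {-1<..<1}"
  with assms show "Bn k r t \<le> (1 + r\<^sup>2) powr (\<gamma> / 2) * b t"
    using increasing_kernel_le[OF assms(2)] by (meson kernel_dominated_def order_trans)
qed

lemma L_integrand_tendsto_approximations:
  fixes phi :: "'a::euclidean_space \<Rightarrow> real" and phin :: "nat \<Rightarrow> 'a \<Rightarrow> real"
  assumes dim: "DIM('a) \<ge> 2"
    and mono: "\<forall>r\<ge>0. \<forall>t\<in>{-1<..<1}. incseq (\<lambda>k. Bn k r t) \<and> (\<lambda>k. Bn k r t) \<longlonglongrightarrow> Bb r t"
    and phi: "continuous_on UNIV phi" and phin: "\<And>k. continuous_on UNIV (phin k)"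
    and M: "\<And>k. \<forall>z\<in>cball 0 (2 * (norm v + norm vs)). \<bar>phin k z\<bar> \<le> C"
    and conv: "\<forall>v. (\<lambda>k. phin k v) \<longlonglongrightarrow> phi v" and \<theta>: "0 < \<theta>" "\<theta> < pi"
  shows "(\<lambda>k. L_integrand (Bn k) (phin k) v vs \<theta>) \<longlonglongrightarrow> L_integrand Bb phi v vs \<theta>"
proof -
  have "(\<lambda>k. Bn k (norm (v - vs)) (cos \<theta>)) \<longlonglongrightarrow> Bb (norm (v - vs)) (cos \<theta>)"
    using mono cos_in_open_interval[OF \<theta>] by simp
  moreover have "(\<lambda>k. \<integral>\<omega>. Delta_phi (phin k) v vs \<theta> \<omega> \<partial>perp_sphere_measure (coll_dir v vs))
      \<longlonglongrightarrow> (\<integral>\<omega>. Delta_phi phi v vs \<theta> \<omega> \<partial>perp_sphere_measure (coll_dir v vs))"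
    unfolding Delta_phi_eq_Delta_dir
  proof (rule integral_perp_sphere_tendsto[OF dim tendsto_const norm_coll_dir norm_coll_dir])
    show "\<bar>Delta_dir (phin k) v vs (coll_dir v vs) \<theta> w\<bar> \<le> 4 * C" if "norm w = 1" for k w
      using that by (intro Delta_dir_bound[OF M]) (auto simp: norm_coll_dir)
    show "(\<lambda>k. Delta_dir (phin k) v vs (coll_dir v vs) \<theta> (sphere_proj (coll_dir v vs) x))
        \<longlonglongrightarrow> Delta_dir phi v vs (coll_dir v vs) \<theta> (sphere_proj (coll_dir v vs) x)" for x
      unfolding Delta_dir_def Let_def using conv by (intro tendsto_intros) auto
  qed (use phi phin in simp_all)
  ultimately show ?thesis unfolding L_integrand_def by (intro tendsto_intros)
qed

lemma L_op_tendsto_approximations: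
  fixes phi :: "'a::euclidean_space \<Rightarrow> real" and phin :: "nat \<Rightarrow> 'a \<Rightarrow> real"
  assumes dim: "DIM('a) \<ge> 2" and gamma: "0 \<le> \<gamma>" and b_nonneg: "\<forall>t\<in>{-1..1}. 0 \<le> b t"
    and W: "integrable lborel (angular_weight b DIM('a))"
    and kB: "kernel_basic Bb" and dom: "kernel_dominated Bb b \<gamma>"
    and kBn: "\<forall>k. kernel_basic (Bn k)"
    and mono: "\<forall>r\<ge>0. \<forall>t\<in>{-1<..<1}. incseq (\<lambda>k. Bn k r t) \<and> (\<lambda>k. Bn k r t) \<longlonglongrightarrow> Bb r t"
    and C2: "C2_with phi D D2" and C2n: "\<forall>k. C2_with (phin k) (Dn k) (D2n k)"
    and conv: "\<forall>v. (\<lambda>k. phin k v) \<longlonglongrightarrow> phi v"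
    and bnd: "\<forall>R. \<exists>C. \<forall>k v. norm v \<le> R \<longrightarrow> deriv_sum2 (phin k) (Dn k) (D2n k) v \<le> C"
  shows "(\<lambda>k. L_op (Bn k) (phin k) v vs) \<longlonglongrightarrow> L_op Bb phi v vs"
proof -
  obtain C where C: "\<And>k z. norm z \<le> 2 * (norm v + norm vs) \<Longrightarrow> deriv_sum2 (phin k) (Dn k) (D2n k) z \<le> C"
    using bnd by blast
  have K: "\<forall>z\<in>cball 0 (2 * (norm v + norm vs)). norm (D2n k z) \<le> C"
    and M: "\<forall>z\<in>cball 0 (2 * (norm v + norm vs)). \<bar>phin k z\<bar> \<le> C" for k
    using order_trans[OF deriv_sum2_bounds(2) C] order_trans[OF deriv_sum2_bounds(1) C] by auto
  note phi = C2_withD(3)[OF C2] and phin = C2_withD(3)[OF C2n[rule_format]]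
  show ?thesis
    using L_integrand_tendsto_approximations[OF dim mono phi phin M conv]
    by (rule L_op_tendsto[OF dim gamma b_nonneg W kB kBn[rule_format]
          increasing_kernels_dominated[OF dom mono] phi C2n[rule_format] K order_refl])
qed

lemma dini_uniform:
  fixes G :: "nat \<Rightarrow> 'a::metric_space \<Rightarrow> real"
  assumes S: "compact S" and cont: "\<And>k. continuous_on S (G k)"
    and dec: "\<And>k x. x \<in> S \<Longrightarrow> G (Suc k) x \<le> G k x"
    and lim: "\<And>x. x \<in> S \<Longrightarrow> (\<lambda>k. G k x) \<longlonglongrightarrow> 0" and e: "0 < e"
  shows "\<exists>N. \<forall>k\<ge>N. \<forall>x\<in>S. G k x < e"
proof (rule ccontr)
  assume "\<not> (\<exists>N. \<forall>k\<ge>N. \<forall>x\<in>S. G k x < e)"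
  then have bad: "\<forall>N. \<exists>k\<ge>N. \<exists>x\<in>S. e \<le> G k x" by (auto simp: not_less)
  have mono: "G k x \<le> G m x" if "m \<le> k" "x \<in> S" for m k x
  proof -
    have "decseq (\<lambda>k. G k x)" using dec[OF that(2)] by (simp add: decseq_Suc_iff)
    then show ?thesis using that(1) by (rule decseqD)
  qed
  have "\<forall>n. \<exists>x. x \<in> S \<and> e \<le> G n x"
    using bad mono by (meson order_trans)
  then obtain xs where xs: "\<And>n. xs n \<in> S" "\<And>n. e \<le> G n (xs n)" by metis
  obtain l \<sigma> where l: "l \<in> S" "strict_mono \<sigma>" "(xs \<circ> \<sigma>) \<longlonglongrightarrow> l"
    using compact_imp_seq_compact[OF S, THEN seq_compactE, of xs] xs(1) by blast
  have "e \<le> G m l" for m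
  proof (rule LIMSEQ_le_const)
    show "(\<lambda>j. G m ((xs \<circ> \<sigma>) j)) \<longlonglongrightarrow> G m l"
      using continuous_on_tendsto_compose[OF cont l(3) l(1)] xs(1) by simp
    show "\<exists>N. \<forall>j\<ge>N. e \<le> G m ((xs \<circ> \<sigma>) j)"
    proof (intro exI allI impI)
      fix j assume "m \<le> j"
      then have "m \<le> \<sigma> j" using seq_suble[OF l(2), of j] by simp
      then show "e \<le> G m ((xs \<circ> \<sigma>) j)" using mono xs by (metis comp_apply order_trans)
    qed
  qed
  then have "e \<le> 0" by (intro LIMSEQ_le_const[OF lim[OF l(1)]]) auto
  with e show False by simp
qed

lemma SUP_tendsto_zero:
  fixes X :: "'b \<Rightarrow> nat \<Rightarrow> real"
  assumes ne: "P \<noteq> {}" and nonneg: "\<And>p k. p \<in> P \<Longrightarrow> 0 \<le> X p k"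
    and small: "\<And>e. 0 < e \<Longrightarrow> \<exists>N. \<forall>k\<ge>N. \<forall>p\<in>P. X p k \<le> e"
  shows "(\<lambda>k. SUP p\<in>P. X p k) \<longlonglongrightarrow> 0"
proof (rule LIMSEQ_I)
  fix r :: real assume "0 < r"
  then obtain N where N: "\<And>k p. k \<ge> N \<Longrightarrow> p \<in> P \<Longrightarrow> X p k \<le> r / 2"
    using small[of "r / 2"] by auto
  have "norm ((SUP p\<in>P. X p k) - 0) < r" if "k \<ge> N" for k
  proof -
    have "bdd_above ((\<lambda>p. X p k) ` P)" using N[OF that] by (intro bdd_aboveI2)
    then have "0 \<le> (SUP p\<in>P. X p k)"
      using ne nonneg by (metis all_not_in_conv cSUP_upper order_trans)
    moreover have "(SUP p\<in>P. X p k) \<le> r / 2" using ne N[OF that] by (intro cSUP_least) auto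
    ultimately show ?thesis using \<open>0 < r\<close> by simp
  qed
  then show "\<exists>N. \<forall>k\<ge>N. norm ((SUP p\<in>P. X p k) - 0) < r" by blast
qed

text \<open>The angular gap between the limit kernel and its \<open>k\<close>-th approximation at relative speed
  \<open>r\<close>; the error of \<open>L\<^sub>B\<^sub>n\<close> is controlled by its integral.\<close>
definition kernel_gap :: "(real \<Rightarrow> real \<Rightarrow> real) \<Rightarrow> (nat \<Rightarrow> real \<Rightarrow> real \<Rightarrow> real) \<Rightarrow> nat \<Rightarrow> nat
    \<Rightarrow> real \<Rightarrow> real \<Rightarrow> real" where
  "kernel_gap Bb Bn n k r \<theta> = indicator {0..pi} \<theta> * ((Bb r (cos \<theta>) - Bn k r (cos \<theta>)) * sin \<theta> ^ n)"

context
  fixes Bb :: "real \<Rightarrow> real \<Rightarrow> real" and Bn :: "nat \<Rightarrow> real \<Rightarrow> real \<Rightarrow> real"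
    and b :: "real \<Rightarrow> real" and \<gamma> :: real and n :: nat
  assumes kB: "kernel_basic Bb" and kBn: "\<And>k. kernel_basic (Bn k)"
    and dom: "kernel_dominated Bb b \<gamma>" and gamma: "0 \<le> \<gamma>"
    and b_nonneg: "\<forall>t\<in>{-1..1}. 0 \<le> b t" and W: "integrable lborel (angular_weight b n)"
    and mono: "\<forall>r\<ge>0. \<forall>t\<in>{-1<..<1}. incseq (\<lambda>k. Bn k r t) \<and> (\<lambda>k. Bn k r t) \<longlonglongrightarrow> Bb r t"
begin

lemma kernel_gap_measurable: "0 \<le> r \<Longrightarrow> kernel_gap Bb Bn n k r \<in> borel_measurable borel"
  unfolding kernel_gap_def using kernel_cos_measurable[OF kB] kernel_cos_measurable[OF kBn]
  by measurable

lemma kernel_gap_bounds: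
  assumes r: "0 \<le> r"
  shows "AE \<theta> in lborel. 0 \<le> kernel_gap Bb Bn n k r \<theta>
           \<and> kernel_gap Bb Bn n k r \<theta> \<le> (1 + r\<^sup>2) powr (\<gamma>/2) * angular_weight b n \<theta>"
proof (rule AE_interior_angle)
  fix \<theta> :: real assume "0 < \<theta>" "\<theta> < pi"
  then have \<theta>: "\<theta> \<in> {0..pi}" and c: "cos \<theta> \<in> {-1<..<1}" and s: "0 \<le> sin \<theta> ^ n"
    using cos_in_open_interval sin_ge_zero by auto
  have le: "Bn k r (cos \<theta>) \<le> Bb r (cos \<theta>)" by (rule increasing_kernel_le[OF mono r c])
  have "Bb r (cos \<theta>) - Bn k r (cos \<theta>) \<le> Bb r (cos \<theta>)"
    using kBn r c by (auto simp: kernel_basic_def)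
  also have "\<dots> \<le> (1 + r\<^sup>2) powr (\<gamma>/2) * b (cos \<theta>)"
    using dom r c by (simp add: kernel_dominated_def)
  finally have "(Bb r (cos \<theta>) - Bn k r (cos \<theta>)) * sin \<theta> ^ n
      \<le> (1 + r\<^sup>2) powr (\<gamma>/2) * b (cos \<theta>) * sin \<theta> ^ n"
    using s by (rule mult_right_mono)
  then show "0 \<le> kernel_gap Bb Bn n k r \<theta>
           \<and> kernel_gap Bb Bn n k r \<theta> \<le> (1 + r\<^sup>2) powr (\<gamma>/2) * angular_weight b n \<theta>"
    using \<theta> s le by (simp add: kernel_gap_def angular_weight_def mult.assoc)
qed (simp add: kernel_gap_def angular_weight_def)

lemma kernel_gap_integrable:
  assumes r: "0 \<le> r"
  shows "integrable lborel (kernel_gap Bb Bn n k r)"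
proof (rule Bochner_Integration.integrable_bound[OF integrable_mult_right[OF W]])
  show "kernel_gap Bb Bn n k r \<in> borel_measurable lborel" using kernel_gap_measurable[OF r] by simp
  show "AE \<theta> in lborel. norm (kernel_gap Bb Bn n k r \<theta>)
          \<le> norm ((1 + r\<^sup>2) powr (\<gamma>/2) * angular_weight b n \<theta>)"
    using kernel_gap_bounds[OF r, of k] by eventually_elim auto
qed

lemma kernel_gap_integral_decreasing:
  assumes r: "0 \<le> r"
  shows "(\<integral>\<theta>. kernel_gap Bb Bn n (Suc k) r \<theta> \<partial>lborel) \<le> (\<integral>\<theta>. kernel_gap Bb Bn n k r \<theta> \<partial>lborel)"
proof (rule integral_mono_AE[OF kernel_gap_integrable[OF r] kernel_gap_integrable[OF r]])
  show "AE \<theta> in lborel. kernel_gap Bb Bn n (Suc k) r \<theta> \<le> kernel_gap Bb Bn n k r \<theta>"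
  proof (rule AE_interior_angle)
    fix \<theta> :: real assume "0 < \<theta>" "\<theta> < pi"
    then have "cos \<theta> \<in> {-1<..<1}" and "0 \<le> sin \<theta> ^ n"
      using cos_in_open_interval sin_ge_zero by auto
    moreover from this(1) have "Bn k r (cos \<theta>) \<le> Bn (Suc k) r (cos \<theta>)"
      using mono r by (auto intro: incseq_SucD)
    ultimately show "kernel_gap Bb Bn n (Suc k) r \<theta> \<le> kernel_gap Bb Bn n k r \<theta>"
      by (simp add: kernel_gap_def indicator_def mult_right_mono)
  qed (simp add: kernel_gap_def)
qed

lemma kernel_gap_integral_tendsto_zero:
  assumes r: "0 \<le> r"
  shows "(\<lambda>k. \<integral>\<theta>. kernel_gap Bb Bn n k r \<theta> \<partial>lborel) \<longlonglongrightarrow> 0"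
proof -
  have "(\<lambda>k. \<integral>\<theta>. kernel_gap Bb Bn n k r \<theta> \<partial>lborel) \<longlonglongrightarrow> (\<integral>\<theta>. 0 \<partial>(lborel :: real measure))"
  proof (rule integral_dominated_convergence[OF _ _ integrable_mult_right[OF W]])
    show "kernel_gap Bb Bn n k r \<in> borel_measurable lborel" for k
      using kernel_gap_measurable[OF r] by simp
    show "AE \<theta> in lborel. norm (kernel_gap Bb Bn n k r \<theta>)
            \<le> (1 + r\<^sup>2) powr (\<gamma>/2) * angular_weight b n \<theta>" for k
      using kernel_gap_bounds[OF r, of k] by eventually_elim auto
    show "AE \<theta> in lborel. (\<lambda>k. kernel_gap Bb Bn n k r \<theta>) \<longlonglongrightarrow> 0"
    proof (rule AE_interior_angle)
      fix \<theta> :: real assume "0 < \<theta>" "\<theta> < pi"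
      then have "(\<lambda>k. Bn k r (cos \<theta>)) \<longlonglongrightarrow> Bb r (cos \<theta>)"
        using mono r cos_in_open_interval by auto
      then show "(\<lambda>k. kernel_gap Bb Bn n k r \<theta>) \<longlonglongrightarrow> 0"
        unfolding kernel_gap_def by (auto intro!: tendsto_eq_intros)
    qed (simp add: kernel_gap_def)
  qed simp
  then show ?thesis by simp
qed

lemma kernel_gap_integral_continuous:
  "continuous_on {0..R} (\<lambda>r. \<integral>\<theta>. kernel_gap Bb Bn n k r \<theta> \<partial>lborel)"
proof (rule continuous_on_sequentiallyI)
  fix rs :: "nat \<Rightarrow> real" and r
  assume rs: "\<forall>j. rs j \<in> {0..R}" and r: "r \<in> {0..R}" and lim: "rs \<longlonglongrightarrow> r"
  show "(\<lambda>j. \<integral>\<theta>. kernel_gap Bb Bn n k (rs j) \<theta> \<partial>lborel) \<longlonglongrightarrow> (\<integral>\<theta>. kernel_gap Bb Bn n k r \<theta> \<partial>lborel)"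
  proof (rule integral_dominated_convergence[OF _ _ integrable_mult_right[OF W]])
    show "kernel_gap Bb Bn n k r \<in> borel_measurable lborel"
      "kernel_gap Bb Bn n k (rs j) \<in> borel_measurable lborel" for j
      using kernel_gap_measurable r rs by auto
    show "AE \<theta> in lborel. norm (kernel_gap Bb Bn n k (rs j) \<theta>)
            \<le> (1 + R\<^sup>2) powr (\<gamma>/2) * angular_weight b n \<theta>" for j
    proof -
      have r0: "0 \<le> rs j" using rs by auto
      have P: "(1 + (rs j)\<^sup>2) powr (\<gamma>/2) \<le> (1 + R\<^sup>2) powr (\<gamma>/2)"
        using gamma rs by (intro powr_mono2 add_left_mono power_mono) auto
      show ?thesis using kernel_gap_bounds[OF r0, of k]
      proof eventually_elim
        case (elim \<theta>)
        then show ?case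
          using mult_right_mono[OF P angular_weight_nonneg[OF b_nonneg, of n \<theta>]] by simp
      qed
    qed
    show "AE \<theta> in lborel. (\<lambda>j. kernel_gap Bb Bn n k (rs j) \<theta>) \<longlonglongrightarrow> kernel_gap Bb Bn n k r \<theta>"
    proof (rule AE_interior_angle)
      fix \<theta> :: real assume "0 < \<theta>" "\<theta> < pi"
      then have "continuous_on {0..} (\<lambda>r. Bb r (cos \<theta>))" "continuous_on {0..} (\<lambda>r. Bn k r (cos \<theta>))"
        using kB kBn cos_in_open_interval by (auto simp: kernel_basic_def)
      then have "(\<lambda>j. Bb (rs j) (cos \<theta>)) \<longlonglongrightarrow> Bb r (cos \<theta>)"
        "(\<lambda>j. Bn k (rs j) (cos \<theta>)) \<longlonglongrightarrow> Bn k r (cos \<theta>)"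
        using r rs by (auto intro!: continuous_on_tendsto_compose[OF _ lim])
      then show "(\<lambda>j. kernel_gap Bb Bn n k (rs j) \<theta>) \<longlonglongrightarrow> kernel_gap Bb Bn n k r \<theta>"
        unfolding kernel_gap_def by (intro tendsto_intros)
    qed (simp add: kernel_gap_def)
  qed
qed

text \<open>By Dini's theorem the gap integrals tend to 0 uniformly on bounded sets of speeds.\<close>
lemma kernel_gap_integral_uniform:
  assumes "0 < e"
  shows "\<exists>N. \<forall>k\<ge>N. \<forall>r\<in>{0..R}. (\<integral>\<theta>. kernel_gap Bb Bn n k r \<theta> \<partial>lborel) < e"
  using assms kernel_gap_integral_decreasing kernel_gap_integral_tendsto_zero
  by (intro dini_uniform[OF compact_Icc kernel_gap_integral_continuous]) auto

end

text \<open>Pointwise in \<open>\<theta>\<close>, the error of the approximating integrand is the kernel gap times the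
  inner integral, which is \<open>O(|v - v\<^sub>*|\<^sup>2 sin\<^sup>2\<theta>)\<close>.\<close>
lemma L_integrand_difference_bound:
  fixes phi :: "'a::euclidean_space \<Rightarrow> real" and Bn :: "nat \<Rightarrow> real \<Rightarrow> real \<Rightarrow> real"
  assumes dim: "DIM('a) \<ge> 2"
    and mono: "\<forall>r\<ge>0. \<forall>t\<in>{-1<..<1}. incseq (\<lambda>k. Bn k r t) \<and> (\<lambda>k. Bn k r t) \<longlonglongrightarrow> Bb r t"
    and dphi: "\<forall>x. (phi has_derivative blinfun_apply (D x)) (at x)"
    and dD: "\<forall>x. (D has_derivative blinfun_apply (D2 x)) (at x)"
    and K: "\<forall>z\<in>cball 0 (2 * (norm v + norm vs)). norm (D2 z) \<le> K"
    and rho: "norm (v - vs) \<le> \<rho>" and \<theta>: "0 < \<theta>" "\<theta> < pi"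
  shows "\<bar>L_integrand (Bn k) phi v vs \<theta> - L_integrand Bb phi v vs \<theta>\<bar>
           \<le> (sphere_mass_bound TYPE('a) * 5 * K * \<rho>\<^sup>2) * kernel_gap Bb Bn DIM('a) k (norm (v - vs)) \<theta>"
proof -
  define c where "c = sphere_mass_bound TYPE('a) * 5 * K * \<rho>\<^sup>2"
  define r where "r = norm (v - vs)"
  define J where "J = (\<integral>\<omega>. Delta_phi phi v vs \<theta> \<omega> \<partial>perp_sphere_measure (coll_dir v vs))"
  have \<theta>': "\<theta> \<in> {0..pi}" and s: "0 \<le> sin \<theta>" using \<theta> sin_ge_zero by auto
  have K0: "0 \<le> K" by (rule cball_bound_nonneg[OF K]) simp
  have le: "Bn k r (cos \<theta>) \<le> Bb r (cos \<theta>)"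
    by (rule increasing_kernel_le[OF mono _ cos_in_open_interval[OF \<theta>]]) (simp add: r_def)
  have "\<bar>J\<bar> \<le> sphere_mass_bound TYPE('a) * (5 * K * r ^ 2 * sin \<theta> ^ 2)"
    unfolding J_def r_def by (rule sphere_average_bound[OF dphi dD K])
  also have "\<dots> = (sphere_mass_bound TYPE('a) * 5 * K * sin \<theta> ^ 2) * r ^ 2"
    by (simp add: algebra_simps)
  also have "\<dots> \<le> (sphere_mass_bound TYPE('a) * 5 * K * sin \<theta> ^ 2) * \<rho> ^ 2"
    using rho K0 sphere_mass_bound_nonneg[where 'a='a]
    by (intro mult_left_mono power_mono) (auto simp: r_def)
  also have "\<dots> = c * sin \<theta> ^ 2" by (simp add: c_def algebra_simps)
  finally have J: "\<bar>J\<bar> \<le> c * sin \<theta> ^ 2" .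
  have "L_integrand (Bn k) phi v vs \<theta> - L_integrand Bb phi v vs \<theta>
      = - ((Bb r (cos \<theta>) - Bn k r (cos \<theta>)) * sin \<theta> ^ (DIM('a) - 2) * J)"
    using \<theta>' by (simp add: L_integrand_def r_def J_def algebra_simps)
  then have "\<bar>L_integrand (Bn k) phi v vs \<theta> - L_integrand Bb phi v vs \<theta>\<bar>
      = (Bb r (cos \<theta>) - Bn k r (cos \<theta>)) * sin \<theta> ^ (DIM('a) - 2) * \<bar>J\<bar>"
    using le s by (simp add: abs_mult)
  also have "\<dots> \<le> (Bb r (cos \<theta>) - Bn k r (cos \<theta>)) * sin \<theta> ^ (DIM('a) - 2) * (c * sin \<theta> ^ 2)"
    using J le s by (intro mult_left_mono) auto
  also have "\<dots> = c * ((Bb r (cos \<theta>) - Bn k r (cos \<theta>)) * (sin \<theta> ^ (DIM('a) - 2) * sin \<theta> ^ 2))"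
    by (simp add: algebra_simps)
  also have "sin \<theta> ^ (DIM('a) - 2) * sin \<theta> ^ 2 = sin \<theta> ^ DIM('a)"
    by (rule power_diff_two[OF dim])
  finally show ?thesis using \<theta>' by (simp add: kernel_gap_def c_def r_def)
qed

lemma L_op_approximation_error:
  fixes phi :: "'a::euclidean_space \<Rightarrow> real"
  assumes dim: "DIM('a) \<ge> 2" and kB: "kernel_basic Bb" and kBn: "\<And>k. kernel_basic (Bn k)"
    and dom: "kernel_dominated Bb b \<gamma>" and gamma: "0 \<le> \<gamma>" and b_nonneg: "\<forall>t\<in>{-1..1}. 0 \<le> b t"
    and W: "integrable lborel (angular_weight b DIM('a))"
    and mono: "\<forall>r\<ge>0. \<forall>t\<in>{-1<..<1}. incseq (\<lambda>k. Bn k r t) \<and> (\<lambda>k. Bn k r t) \<longlonglongrightarrow> Bb r t"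
    and C2: "C2_with phi D D2"
    and K: "\<forall>z\<in>cball 0 (2 * (norm v + norm vs)). norm (D2 z) \<le> K"
    and rho: "norm (v - vs) \<le> \<rho>"
  shows "\<bar>L_op (Bn k) phi v vs - L_op Bb phi v vs\<bar>
           \<le> (sphere_mass_bound TYPE('a) * 5 * K * \<rho>\<^sup>2)
             * (\<integral>\<theta>. kernel_gap Bb Bn DIM('a) k (norm (v - vs)) \<theta> \<partial>lborel)"
proof -
  define c where "c = sphere_mass_bound TYPE('a) * 5 * K * \<rho>\<^sup>2"
  define r where "r = norm (v - vs)"
  have r0: "0 \<le> r" by (simp add: r_def)
  have "0 \<le> K" by (rule cball_bound_nonneg[OF K]) simp
  then have c0: "0 \<le> c" using sphere_mass_bound_nonneg[where 'a='a] by (simp add: c_def)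
  have "L_op (Bn k) phi v vs - L_op Bb phi v vs
      = (\<integral>\<theta>. L_integrand (Bn k) phi v vs \<theta> - L_integrand Bb phi v vs \<theta> \<partial>lborel)"
    unfolding L_op_eq_integral
    using L_op_bound(1)[OF dim kBn increasing_kernels_dominated[OF dom mono] gamma b_nonneg W C2 K rho]
      L_op_bound(1)[OF dim kB dom gamma b_nonneg W C2 K rho]
    by simp
  also have "\<bar>\<dots>\<bar> \<le> (\<integral>\<theta>. \<bar>L_integrand (Bn k) phi v vs \<theta> - L_integrand Bb phi v vs \<theta>\<bar> \<partial>lborel)"
    by (rule integral_abs_bound)
  also have "\<dots> \<le> (\<integral>\<theta>. c * kernel_gap Bb Bn DIM('a) k r \<theta> \<partial>lborel)"
  proof (rule integral_mono_AE')
    show "integrable lborel (\<lambda>\<theta>. c * kernel_gap Bb Bn DIM('a) k r \<theta>)"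
      by (intro integrable_mult_right kernel_gap_integrable[OF kB kBn dom gamma b_nonneg W mono r0])
    show "AE \<theta> in lborel. 0 \<le> c * kernel_gap Bb Bn DIM('a) k r \<theta>"
      using kernel_gap_bounds[OF kB kBn dom gamma b_nonneg W mono r0, of k]
      by eventually_elim (use c0 in simp)
    show "AE \<theta> in lborel. \<bar>L_integrand (Bn k) phi v vs \<theta> - L_integrand Bb phi v vs \<theta>\<bar>
            \<le> c * kernel_gap Bb Bn DIM('a) k r \<theta>"
      using L_integrand_difference_bound[OF dim mono C2_withD(1,2)[OF C2] K rho]
      by (intro AE_interior_angle) (auto simp: L_integrand_def kernel_gap_def c_def r_def)
  qed
  finally show ?thesis by (simp add: c_def r_def)
qed

text \<open>Part (II), uniform statement: on \<open>{|v| + |v\<^sub>*| \<le> R}\<close> the error is at most a constant times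
  the gap integral at a speed in \<open>[0, R]\<close>, which is uniformly small by Dini's theorem.\<close>
lemma L_op_uniform_convergence:
  fixes phi :: "'a::euclidean_space \<Rightarrow> real"
  assumes dim: "DIM('a) \<ge> 2" and kB: "kernel_basic Bb" and kBn: "\<forall>k. kernel_basic (Bn k)"
    and dom: "kernel_dominated Bb b \<gamma>" and gamma: "0 \<le> \<gamma>" and b_nonneg: "\<forall>t\<in>{-1..1}. 0 \<le> b t"
    and W: "integrable lborel (angular_weight b DIM('a))"
    and mono: "\<forall>r\<ge>0. \<forall>t\<in>{-1<..<1}. incseq (\<lambda>k. Bn k r t) \<and> (\<lambda>k. Bn k r t) \<longlonglongrightarrow> Bb r t"
    and C2: "C2_with phi D D2" and R: "0 < R"
  shows "(\<lambda>k. SUP p \<in> {p::'a \<times> 'a. norm (fst p) + norm (snd p) \<le> R}.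
            \<bar>L_op (Bn k) phi (fst p) (snd p) - L_op Bb phi (fst p) (snd p)\<bar>) \<longlonglongrightarrow> 0"
proof (rule SUP_tendsto_zero)
  have "(0, 0) \<in> {p::'a \<times> 'a. norm (fst p) + norm (snd p) \<le> R}" using R by simp
  then show "{p::'a \<times> 'a. norm (fst p) + norm (snd p) \<le> R} \<noteq> {}" by blast
  fix e :: real assume e: "0 < e"
  obtain K where K: "\<forall>z\<in>cball 0 (2 * R). norm (D2 z) \<le> K"
    using C2_with_second_derivative_bounded[OF C2] by blast
  have K0: "0 \<le> K" by (rule cball_bound_nonneg[OF K]) (use R in simp)
  define c where "c = sphere_mass_bound TYPE('a) * 5 * K * R\<^sup>2"
  have c0: "0 \<le> c" using K0 sphere_mass_bound_nonneg[where 'a='a] by (simp add: c_def)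
  have "0 < e / (c + 1)" using e c0 by simp
  then obtain N where N: "\<forall>k\<ge>N. \<forall>r\<in>{0..R}.
      (\<integral>\<theta>. kernel_gap Bb Bn DIM('a) k r \<theta> \<partial>lborel) < e / (c + 1)"
    using kernel_gap_integral_uniform[OF kB kBn[rule_format] dom gamma b_nonneg W mono] by blast
  have "\<bar>L_op (Bn k) phi (fst p) (snd p) - L_op Bb phi (fst p) (snd p)\<bar> \<le> e"
    if k: "k \<ge> N" and p: "norm (fst p) + norm (snd p) \<le> R" for k p
  proof -
    have dist: "norm (fst p - snd p) \<le> R"
      using p norm_triangle_ineq4[of "fst p" "snd p"] by linarith
    have "\<forall>z\<in>cball 0 (2 * (norm (fst p) + norm (snd p))). norm (D2 z) \<le> K" using K p by auto
    from L_op_approximation_error[OF dim kB kBn[rule_format] dom gamma b_nonneg W mono C2 this dist,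
        of k]
    have "\<bar>L_op (Bn k) phi (fst p) (snd p) - L_op Bb phi (fst p) (snd p)\<bar>
        \<le> c * (\<integral>\<theta>. kernel_gap Bb Bn DIM('a) k (norm (fst p - snd p)) \<theta> \<partial>lborel)"
      by (simp add: c_def)
    also have "\<dots> \<le> c * (e / (c + 1))"
      using N k dist c0 by (intro mult_left_mono) (auto intro: less_imp_le)
    also have "\<dots> \<le> e" using c0 e by (simp add: field_simps)
    finally show ?thesis .
  qed
  then show "\<exists>N. \<forall>k\<ge>N. \<forall>p\<in>{p::'a \<times> 'a. norm (fst p) + norm (snd p) \<le> R}.
      \<bar>L_op (Bn k) phi (fst p) (snd p) - L_op Bb phi (fst p) (snd p)\<bar> \<le> e" by blast
qed simp

theorem proposition2p1:
  fixes Bb :: "real \<Rightarrow> real \<Rightarrow> real" and b :: "real \<Rightarrow> real" and \<gamma> :: real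
  assumes dim: "DIM('a::euclidean_space) \<ge> 2"
    and kB: "kernel_basic Bb"
    and gamma: "0 < \<gamma>" "\<gamma> \<le> 2"
    and b_meas: "b \<in> borel_measurable (restrict_space borel {-1..1})"
    and b_nonneg: "\<forall>t\<in>{-1..1}. 0 \<le> b t"
    and B_bound: "\<forall>r\<ge>0. \<forall>t\<in>{-1..1}. Bb r t \<le> (1 + r\<^sup>2) powr (\<gamma>/2) * b t"
    and H0: "(\<integral>\<^sup>+\<theta>\<in>{0..pi}. ennreal (b (cos \<theta>) * sin \<theta> ^ DIM('a)) \<partial>lborel) < \<infinity>"
  shows
    "(\<forall>(phi::'a \<Rightarrow> real) D D2. C2_with phi D D2 \<longrightarrow>
        continuous_on UNIV (\<lambda>p. L_op Bb phi (fst p) (snd p)))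
     \<and>
     (\<forall>Bn :: nat \<Rightarrow> real \<Rightarrow> real \<Rightarrow> real.
        (\<forall>k. kernel_basic (Bn k)) \<and>
        (\<forall>r\<ge>0. \<forall>t\<in>{-1<..<1}. incseq (\<lambda>k. Bn k r t) \<and> (\<lambda>k. Bn k r t) \<longlonglongrightarrow> Bb r t)
        \<longrightarrow>
        (\<forall>(phi::'a \<Rightarrow> real) D D2. C2_with phi D D2 \<longrightarrow>
           (\<forall>R. 0 < R \<longrightarrow>
              (\<lambda>k. SUP p \<in> {p::'a \<times> 'a. norm (fst p) + norm (snd p) \<le> R}.
                     \<bar>L_op (Bn k) phi (fst p) (snd p) - L_op Bb phi (fst p) (snd p)\<bar>)
              \<longlonglongrightarrow> 0)
           \<and>
           (\<forall>(phin :: nat \<Rightarrow> 'a \<Rightarrow> real) Dn D2n.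
              (\<forall>k. C2_with (phin k) (Dn k) (D2n k)) \<and>
              (\<forall>v. (\<lambda>k. phin k v) \<longlonglongrightarrow> phi v) \<and>
              (\<forall>R. \<exists>C. \<forall>k v. norm v \<le> R \<longrightarrow> deriv_sum2 (phin k) (Dn k) (D2n k) v \<le> C)
              \<longrightarrow>
              (\<forall>v vs. (\<lambda>k. L_op (Bn k) (phin k) v vs) \<longlonglongrightarrow> L_op Bb phi v vs))))"
proof -
  have W: "integrable lborel (angular_weight b DIM('a))"
    by (rule integrable_angular_weight[OF b_meas b_nonneg H0])
  have dom: "kernel_dominated Bb b \<gamma>" using B_bound by (simp add: kernel_dominated_def)
  have gamma0: "0 \<le> \<gamma>" using gamma by simp
  show ?thesis
  proof (intro conjI allI impI; (elim conjE)?)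
    show "continuous_on UNIV (\<lambda>p. L_op Bb phi (fst p) (snd p))" if "C2_with phi D D2"
      for phi :: "'a \<Rightarrow> real" and D D2
      by (rule L_op_continuous[OF dim gamma0 b_nonneg W kB dom that])
  next
    fix Bn and phi :: "'a \<Rightarrow> real" and D D2 and R :: real
    assume "\<forall>k. kernel_basic (Bn k)" "C2_with phi D D2" "0 < R"
      and "\<forall>r\<ge>0. \<forall>t\<in>{-1<..<1}. incseq (\<lambda>k. Bn k r t) \<and> (\<lambda>k. Bn k r t) \<longlonglongrightarrow> Bb r t"
    then show "(\<lambda>k. SUP p \<in> {p::'a \<times> 'a. norm (fst p) + norm (snd p) \<le> R}.
                 \<bar>L_op (Bn k) phi (fst p) (snd p) - L_op Bb phi (fst p) (snd p)\<bar>) \<longlonglongrightarrow> 0"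
      by (intro L_op_uniform_convergence[OF dim kB _ dom gamma0 b_nonneg W])
  next
    fix Bn and phi :: "'a \<Rightarrow> real" and D D2 phin Dn D2n v vs
    assume "\<forall>k. kernel_basic (Bn k)" "C2_with phi D D2" "\<forall>k. C2_with (phin k) (Dn k) (D2n k)"
      and "\<forall>r\<ge>0. \<forall>t\<in>{-1<..<1}. incseq (\<lambda>k. Bn k r t) \<and> (\<lambda>k. Bn k r t) \<longlonglongrightarrow> Bb r t"
      and "\<forall>v. (\<lambda>k. phin k v) \<longlonglongrightarrow> phi v"
      and "\<forall>R. \<exists>C. \<forall>k v. norm v \<le> R \<longrightarrow> deriv_sum2 (phin k) (Dn k) (D2n k) v \<le> C"
    then show "(\<lambda>k. L_op (Bn k) (phin k) v vs) \<longlonglongrightarrow> L_op Bb phi v vs"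
      by (intro L_op_tendsto_approximations[OF dim gamma0 b_nonneg W kB dom])
  qed
qed

end
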